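(* Let $\gamma>0$ and let $(\Lambda,P)$ be a stochastic energy exchange model such that $\nu^\gamma_{\mathcal{E},N}$ is reversible for its generator for all $\mathcal{E}>0$, $N\ge2$. Assume there are $\tilde C>0$ and $m\ge0$ with $\lambda(\mathcal{E},2)\ge\tilde C\mathcal{E}^m$ for all $\mathcal{E}>0$. Then for all $\mathcal{E}>0$ and $N\ge2$, $$\lambda(\mathcal{E},N)\ \ge\ \frac{\tilde C}{2^m}\,\lambda^{*,m}(\mathcal{E},N).$$
   Context: Fix $\gamma>0$. $\nu^{\gamma}(dx)=x^{\gamma-1}e^{-x}\Gamma(\gamma)^{-1}dx$ on $(0,\infty)$; $\mathcal{S}_{\mathcal{E},N}=\{x\in(0,\infty)^N:\frac1N\sum_i x_i=\mathcal{E}\}$; $\nu_{\mathcal{E},N}=\nu^\gamma_{\mathcal{E},N}$ is the conditional law of $(\nu^\gamma)^{\otimes N}$ on $\mathcal{S}_{\mathcal{E},N}$, with expectation $E_{\nu_{\mathcal{E},N}}$. $\mu^\gamma$ is the Beta$(\gamma,\gamma)$ law on $[0,1]$. For $i\ne j$, $\alpha\in[0,1]$, $T_{i,j,\alpha}x$ replaces $x_i$ by $\alpha(x_i+x_j)$ and $x_j$ by $(1-\alpha)(x_i+x_j)$. Define $E_{i,j}f(x)=\int\mu^\gamma(d\alpha)f(T_{i,j,\alpha}x)$ (this is the conditional expectation of $f$ under $\nu_{\mathcal{E},N}$ given $\{x_k\}_{k\ne i,j}$) and $D_{i,j}f=E_{i,j}f-f$. For real $m$, $\mathcal{D}^{*,m}_{\mathcal{E},N}(f)=\sum_{i=1}^{N-1}E_{\nu_{\mathcal{E},N}}[(x_i+x_{i+1})^m(D_{i,i+1}f)^2]$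 and $\lambda^{*,m}(\mathcal{E},N)=\inf\{\mathcal{D}^{*,m}_{\mathcal{E},N}(f)/E_{\nu_{\mathcal{E},N}}[f^2]: f\in L^2(\nu_{\mathcal{E},N}), E_{\nu_{\mathcal{E},N}}[f]=0,f\ne0\}$. A model $(\Lambda,P)$: continuous $\Lambda:(0,\infty)^2\to[0,\infty)$, continuous probability kernel $P(a,b,d\alpha)$ on $[0,1]$; generator $\mathcal{L}f(x)=\sum_{i=1}^{N-1}\Lambda(x_i,x_{i+1})\int P(x_i,x_{i+1},d\alpha)[f(T_{i,i+1,\alpha}x)-f(x)]$; Dirichlet form $\mathcal{D}_{\mathcal{E},N}(f)=\frac12\sum_{i=1}^{N-1}\int\nu_{\mathcal{E},N}(dx)\Lambda(x_i,x_{i+1})\int P(x_i,x_{i+1},d\alpha)[f(T_{i,i+1,\alpha}x)-f(x)]^2$; spectral gap $\lambda(\mathcal{E},N)$ is the infimum of $\mathcal{D}_{\mathcal{E},N}(f)/E_{\nu_{\mathcal{E},N}}[f^2]$ over nonzero mean-zero $f\in L^2(\nu_{\mathcal{E},N})$. *)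

theory Defs
  imports "HOL-Probability.Probability"
begin

text \<open>Coordinates are 0-based: a point of (0,inf)^N is a function x with x 0, ..., x (N-1).
  Nearest-neighbour bonds are (i, i+1) for i < N - 1.\<close>

definition gamma_dens :: "real \<Rightarrow> real \<Rightarrow> real" where
  "gamma_dens g t = (if t > 0 then t powr (g - 1) * exp (- t) / Gamma g else 0)"

text \<open>Parametrisation of the hyperplane {sum x_i = N E} by its first N-1 coordinates.\<close>
definition embed_pt :: "nat \<Rightarrow> real \<Rightarrow> (nat \<Rightarrow> real) \<Rightarrow> (nat \<Rightarrow> real)" where
  "embed_pt N E y = (\<lambda>i. if i < N - 1 then y i
                          else if i = N - 1 then real N * E - (\<Sum>j<N - 1. y j)
                          else undefined)"

definition cond_dens :: "real \<Rightarrow> nat \<Rightarrow> real \<Rightarrow> (nat \<Rightarrow> real) \<Rightarrow> real" where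
  "cond_dens g N E y = (\<Prod>i<N. gamma_dens g (embed_pt N E y i))"

text \<open>nu_{E,N}: conditional law of (nu^gamma)^N on S_{E,N} (normalised restriction of the
  product density to the hyperplane), as a measure on PiM {..<N} lborel.\<close>
definition nuEN :: "real \<Rightarrow> real \<Rightarrow> nat \<Rightarrow> (nat \<Rightarrow> real) measure" where
  "nuEN g E N = distr
     (density (PiM {..<N - 1} (\<lambda>_. lborel))
        (\<lambda>y. ennreal (cond_dens g N E y) /
              (\<integral>\<^sup>+ z. ennreal (cond_dens g N E z) \<partial>PiM {..<N - 1} (\<lambda>_. lborel))))
     (PiM {..<N} (\<lambda>_. lborel)) (embed_pt N E)"

definition beta_meas :: "real \<Rightarrow> real measure" where
  "beta_meas g = density lborel
     (\<lambda>a. ennreal (if 0 < a \<and> a < 1 then a powr (g - 1) * (1 - a) powr (g - 1) / Beta g g else 0))"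

definition Tmap :: "nat \<Rightarrow> nat \<Rightarrow> real \<Rightarrow> (nat \<Rightarrow> real) \<Rightarrow> (nat \<Rightarrow> real)" where
  "Tmap i j a x = x(i := a * (x i + x j), j := (1 - a) * (x i + x j))"

definition Eij :: "real \<Rightarrow> nat \<Rightarrow> nat \<Rightarrow> ((nat \<Rightarrow> real) \<Rightarrow> real) \<Rightarrow> (nat \<Rightarrow> real) \<Rightarrow> real" where
  "Eij g i j f x = (\<integral>a. f (Tmap i j a x) \<partial>beta_meas g)"

definition Dij :: "real \<Rightarrow> nat \<Rightarrow> nat \<Rightarrow> ((nat \<Rightarrow> real) \<Rightarrow> real) \<Rightarrow> (nat \<Rightarrow> real) \<Rightarrow> real" where
  "Dij g i j f x = Eij g i j f x - f x"

definition L2_meanzero :: "'a measure \<Rightarrow> ('a \<Rightarrow> real) \<Rightarrow> bool" where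
  "L2_meanzero M f \<longleftrightarrow> f \<in> borel_measurable M \<and> integrable M (\<lambda>x. (f x)\<^sup>2)
      \<and> (\<integral>x. f x \<partial>M) = 0 \<and> (\<integral>x. (f x)\<^sup>2 \<partial>M) \<noteq> 0"

definition Dstar :: "real \<Rightarrow> real \<Rightarrow> real \<Rightarrow> nat \<Rightarrow> ((nat \<Rightarrow> real) \<Rightarrow> real) \<Rightarrow> ennreal" where
  "Dstar g m E N f = (\<Sum>i<N - 1. \<integral>\<^sup>+ x. ennreal ((x i + x (Suc i)) powr m * (Dij g i (Suc i) f x)\<^sup>2) \<partial>nuEN g E N)"

definition lambda_star :: "real \<Rightarrow> real \<Rightarrow> real \<Rightarrow> nat \<Rightarrow> ennreal" where
  "lambda_star g m E N = (INF f \<in> {f. L2_meanzero (nuEN g E N) f}.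
      Dstar g m E N f / ennreal (\<integral>x. (f x)\<^sup>2 \<partial>nuEN g E N))"

definition exchange_model :: "(real \<Rightarrow> real \<Rightarrow> real) \<Rightarrow> (real \<Rightarrow> real \<Rightarrow> real measure) \<Rightarrow> bool" where
  "exchange_model Lam P \<longleftrightarrow>
     continuous_on {p. 0 < fst p \<and> 0 < snd p} (\<lambda>p. Lam (fst p) (snd p))
   \<and> (\<forall>a b. 0 < a \<longrightarrow> 0 < b \<longrightarrow> 0 \<le> Lam a b)
   \<and> (\<forall>a b. 0 < a \<longrightarrow> 0 < b \<longrightarrow>
        prob_space (P a b) \<and> sets (P a b) = sets borel \<and> emeasure (P a b) {0..1} = 1)
   \<and> (\<forall>h::real \<Rightarrow> real. continuous_on {0..1} h \<longrightarrow>
        continuous_on {p. 0 < fst p \<and> 0 < snd p} (\<lambda>p. \<integral>a. h a \<partial>P (fst p) (snd p)))"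

definition generator :: "(real \<Rightarrow> real \<Rightarrow> real) \<Rightarrow> (real \<Rightarrow> real \<Rightarrow> real measure) \<Rightarrow> nat
    \<Rightarrow> ((nat \<Rightarrow> real) \<Rightarrow> real) \<Rightarrow> (nat \<Rightarrow> real) \<Rightarrow> real" where
  "generator Lam P N f x = (\<Sum>i<N - 1. Lam (x i) (x (Suc i)) *
      (\<integral>a. f (Tmap i (Suc i) a x) - f x \<partial>P (x i) (x (Suc i))))"

text \<open>nu_{E,N} is reversible for the generator, for all E > 0 and N >= 2
  (symmetry of the generator on bounded measurable test functions).\<close>
definition reversible_model :: "real \<Rightarrow> (real \<Rightarrow> real \<Rightarrow> real) \<Rightarrow> (real \<Rightarrow> real \<Rightarrow> real measure) \<Rightarrow> bool" where
  "reversible_model g Lam P \<longleftrightarrow> (\<forall>E>0. \<forall>N\<ge>2. \<forall>f h.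
      f \<in> borel_measurable (PiM {..<N} (\<lambda>_. lborel)) \<and> h \<in> borel_measurable (PiM {..<N} (\<lambda>_. lborel))
      \<and> bounded (range f) \<and> bounded (range h)
      \<and> integrable (nuEN g E N) (\<lambda>x. h x * generator Lam P N f x)
      \<and> integrable (nuEN g E N) (\<lambda>x. f x * generator Lam P N h x)
      \<longrightarrow> (\<integral>x. h x * generator Lam P N f x \<partial>nuEN g E N) = (\<integral>x. f x * generator Lam P N h x \<partial>nuEN g E N))"

definition dirichlet_form :: "real \<Rightarrow> (real \<Rightarrow> real \<Rightarrow> real) \<Rightarrow> (real \<Rightarrow> real \<Rightarrow> real measure)
    \<Rightarrow> real \<Rightarrow> nat \<Rightarrow> ((nat \<Rightarrow> real) \<Rightarrow> real) \<Rightarrow> ennreal" where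
  "dirichlet_form g Lam P E N f = (\<Sum>i<N - 1. \<integral>\<^sup>+ x. ennreal (Lam (x i) (x (Suc i))) *
      (\<integral>\<^sup>+ a. ennreal ((f (Tmap i (Suc i) a x) - f x)\<^sup>2) \<partial>P (x i) (x (Suc i))) \<partial>nuEN g E N) / 2"

definition spectral_gap :: "real \<Rightarrow> (real \<Rightarrow> real \<Rightarrow> real) \<Rightarrow> (real \<Rightarrow> real \<Rightarrow> real measure)
    \<Rightarrow> real \<Rightarrow> nat \<Rightarrow> ennreal" where
  "spectral_gap g Lam P E N = (INF f \<in> {f. L2_meanzero (nuEN g E N) f}.
      dirichlet_form g Lam P E N f / ennreal (\<integral>x. (f x)\<^sup>2 \<partial>nuEN g E N))"

end

theory Submission
  imports Defs
begin

text \<open>Fix a bond \<open>(i, i + 1)\<close> and condition \<open>nu_{E,N}\<close> on all other sites.  Restricted to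
  \<open>x_i + x_{i+1} = t\<close>, a product of two Gamma(g) densities makes \<open>x_i / t\<close> Beta(g,g)-distributed,
  so the conditional law of the pair is the two-site measure \<open>nu_{t/2,2}\<close> and \<open>E_{i,i+1}\<close> is
  the conditional mean.  Along each bond orbit the \<open>i\<close>-th term of \<open>D^{*,m}\<close> is therefore \<open>t^m\<close>
  times the variance of \<open>f\<close> under \<open>nu_{t/2,2}\<close>; the two-site gap bounds it by
  \<open>2^m / C\<close> times the two-site Dirichlet form, and averaging over the other sites turns that
  back into the \<open>i\<close>-th term of the \<open>N\<close>-site Dirichlet form.  Summing over bonds and taking
  infima over \<open>f\<close> gives the bound.\<close>

section \<open>The Beta law and the splitting of two Gamma variables\<close>

definition beta_weight :: "real \<Rightarrow> real \<Rightarrow> real" where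
  "beta_weight g a = (if 0 < a \<and> a < 1 then a powr (g - 1) * (1 - a) powr (g - 1) else 0)"

lemma beta_weight_nonneg: "0 \<le> beta_weight g a"
  by (simp add: beta_weight_def)

lemma borel_measurable_beta_weight[measurable]: "beta_weight g \<in> borel_measurable borel"
  unfolding beta_weight_def by measurable

lemma gamma_dens_nonneg: "0 < g \<Longrightarrow> 0 \<le> gamma_dens g t"
  by (simp add: gamma_dens_def)

lemma borel_measurable_gamma_dens[measurable]: "gamma_dens g \<in> borel_measurable borel"
  unfolding gamma_dens_def by measurable

lemma Beta_diag_pos: "0 < (g::real) \<Longrightarrow> 0 < Beta g g"
  by (simp add: Beta_def Gamma_real_pos)

lemma nn_integral_beta_weight:
  assumes "0 < g"
  shows "(\<integral>\<^sup>+ a. ennreal (beta_weight g a) \<partial>lborel) = ennreal (Beta g g)"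
proof -
  have "((\<lambda>t. t powr (g - 1) * (1 - t) powr (g - 1)) has_integral Beta g g) {0<..<1}"
    using has_integral_Beta_real[of g g] assms by (simp add: has_integral_Icc_iff_Ioo)
  then have "(\<integral>\<^sup>+ a. ennreal (a powr (g - 1) * (1 - a) powr (g - 1)) * indicator {0<..<1} a \<partial>lborel)
      = ennreal (Beta g g)"
    by (rule nn_integral_has_integral_lebesgue'[rotated]) simp
  moreover have "(\<integral>\<^sup>+ a. ennreal (beta_weight g a) \<partial>lborel) =
     (\<integral>\<^sup>+ a. ennreal (a powr (g - 1) * (1 - a) powr (g - 1)) * indicator {0<..<1} a \<partial>lborel)"
    by (intro nn_integral_cong) (auto simp: beta_weight_def indicator_def)
  ultimately show ?thesis by simp
qed

lemma beta_meas_eq_density: "beta_meas g = density lborel (\<lambda>a. ennreal (beta_weight g a / Beta g g))"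
  unfolding beta_meas_def beta_weight_def by (intro arg_cong2[where f=density] refl ext) auto

lemma nn_integral_beta_meas:
  assumes "0 < g" and [measurable]: "G \<in> borel_measurable borel"
  shows "(\<integral>\<^sup>+ a. G a \<partial>beta_meas g)
    = ennreal (1 / Beta g g) * (\<integral>\<^sup>+ a. ennreal (beta_weight g a) * G a \<partial>lborel)"
proof -
  have "(\<integral>\<^sup>+ a. G a \<partial>beta_meas g) = (\<integral>\<^sup>+ a. ennreal (beta_weight g a / Beta g g) * G a \<partial>lborel)"
    unfolding beta_meas_eq_density by (subst nn_integral_density) auto
  also have "\<dots> = (\<integral>\<^sup>+ a. ennreal (1 / Beta g g) * (ennreal (beta_weight g a) * G a) \<partial>lborel)"
    using Beta_diag_pos[OF assms(1)]
    by (intro nn_integral_cong) (simp add: divide_inverse ennreal_mult beta_weight_nonneg ac_simps)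
  also have "\<dots> = ennreal (1 / Beta g g) * (\<integral>\<^sup>+ a. ennreal (beta_weight g a) * G a \<partial>lborel)"
    by (rule nn_integral_cmult) auto
  finally show ?thesis .
qed

lemma prob_space_beta_meas: assumes "0 < g" shows "prob_space (beta_meas g)"
proof
  have "emeasure (beta_meas g) (space (beta_meas g)) = (\<integral>\<^sup>+ a. 1 \<partial>beta_meas g)"
    by simp
  also have "\<dots> = ennreal (1 / Beta g g) * ennreal (Beta g g)"
    using nn_integral_beta_meas[OF assms, of "\<lambda>_. 1"] nn_integral_beta_weight[OF assms] by simp
  also have "\<dots> = 1" using Beta_diag_pos[OF assms] by (simp add: ennreal_mult'[symmetric])
  finally show "emeasure (beta_meas g) (space (beta_meas g)) = 1" .
qed

lemma sets_beta_meas[simp, measurable_cong]: "sets (beta_meas g) = sets borel"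
  by (simp add: beta_meas_def)

lemma space_beta_meas[simp]: "space (beta_meas g) = UNIV"
  by (simp add: beta_meas_def)

definition gamma_split_const :: "real \<Rightarrow> real \<Rightarrow> real" where
  "gamma_split_const g R = R powr (2 * g - 2) * exp (- R) / (Gamma g * Gamma g)"

lemma gamma_split_const_pos: "0 < g \<Longrightarrow> 0 < R \<Longrightarrow> 0 < gamma_split_const g R"
  by (simp add: gamma_split_const_def Gamma_real_pos)

lemma gamma_dens_split:
  assumes "0 < R"
  shows "gamma_dens g (R * a) * gamma_dens g (R - R * a) = gamma_split_const g R * beta_weight g a"
proof (cases "0 < a \<and> a < 1")
  case True
  have pos: "R * a > 0" "R - R * a > 0" using True assms by (auto simp: algebra_simps)
  have "gamma_dens g (R * a) * gamma_dens g (R - R * a)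
      = ((R * a) powr (g - 1) * (R - R * a) powr (g - 1)) * (exp (- (R * a)) * exp (- (R - R * a)))
        / (Gamma g * Gamma g)"
    using pos by (simp add: gamma_dens_def)
  also have "(R * a) powr (g - 1) * (R - R * a) powr (g - 1)
      = (R powr (g - 1) * R powr (g - 1)) * (a powr (g - 1) * (1 - a) powr (g - 1))"
    using True assms powr_mult[of R "1 - a" "g - 1"] by (simp add: powr_mult algebra_simps)
  also have "R powr (g - 1) * R powr (g - 1) = R powr (2 * g - 2)"
    by (simp add: powr_add[symmetric])
  also have "exp (- (R * a)) * exp (- (R - R * a)) = exp (- R)"
    by (simp add: exp_add[symmetric])
  finally show ?thesis using True
    by (simp add: beta_weight_def gamma_split_const_def)
next
  case False
  then have "a \<le> 0 \<or> 1 \<le> a" by auto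
  then have "R * a \<le> 0 \<or> R - R * a \<le> 0"
    using assms mult_left_mono[of 1 a R] by (auto simp: mult_nonneg_nonpos)
  then have "gamma_dens g (R * a) * gamma_dens g (R - R * a) = 0"
    by (auto simp: gamma_dens_def)
  moreover have "beta_weight g a = 0" using False by (simp add: beta_weight_def)
  ultimately show ?thesis by simp
qed

lemma nn_integral_gamma_convolution_rescale:
  assumes "0 < R" "0 < g" and [measurable]: "G \<in> borel_measurable borel"
  shows "(\<integral>\<^sup>+ u. ennreal (gamma_dens g u * gamma_dens g (R - u)) * G u \<partial>lborel)
       = ennreal (R * gamma_split_const g R) * (\<integral>\<^sup>+ a. ennreal (beta_weight g a) * G (R * a) \<partial>lborel)"
proof -
  note K = gamma_split_const_pos[OF assms(2,1)]
  have "(\<integral>\<^sup>+ u. ennreal (gamma_dens g u * gamma_dens g (R - u)) * G u \<partial>lborel)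
     = ennreal \<bar>R\<bar> * (\<integral>\<^sup>+ a. ennreal (gamma_dens g (0 + R * a) * gamma_dens g (R - (0 + R * a)))
         * G (0 + R * a) \<partial>lborel)"
    by (rule nn_integral_real_affine) (use assms in auto)
  also have "\<dots> = ennreal R * (\<integral>\<^sup>+ a. ennreal (gamma_split_const g R) * (ennreal (beta_weight g a) * G (R * a)) \<partial>lborel)"
    using assms K by (simp add: gamma_dens_split ennreal_mult' beta_weight_nonneg mult.assoc)
  also have "\<dots> = ennreal (R * gamma_split_const g R) * (\<integral>\<^sup>+ a. ennreal (beta_weight g a) * G (R * a) \<partial>lborel)"
    using assms K by (subst nn_integral_cmult) (auto simp: ennreal_mult mult.assoc)
  finally show ?thesis .
qed

lemma nn_integral_gamma_convolution:
  assumes "0 < g" "0 < R"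
  shows "(\<integral>\<^sup>+ u. ennreal (gamma_dens g u * gamma_dens g (R - u)) \<partial>lborel)
    = ennreal (R * gamma_split_const g R * Beta g g)"
  using nn_integral_gamma_convolution_rescale[OF assms(2) assms(1), of "\<lambda>_. 1"]
    nn_integral_beta_weight[OF assms(1)] assms gamma_split_const_pos[OF assms(1,2)] Beta_diag_pos[OF assms(1)]
  by (simp add: ennreal_mult)

text \<open>Given their sum R, two independent Gamma(g) variables split it as (a R, (1 - a) R) with
  a Beta(g,g)-distributed.\<close>
lemma nn_integral_gamma_convolution_split:
  assumes "0 < g" and [measurable]: "G \<in> borel_measurable borel"
  shows "(\<integral>\<^sup>+ u. ennreal (gamma_dens g u * gamma_dens g (R - u)) * G u \<partial>lborel)
       = (\<integral>\<^sup>+ u. ennreal (gamma_dens g u * gamma_dens g (R - u)) \<partial>lborel) * (\<integral>\<^sup>+ a. G (a * R) \<partial>beta_meas g)"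
proof (cases "0 < R")
  case False
  then have vanish: "ennreal (gamma_dens g u * gamma_dens g (R - u)) = 0" for u
    by (auto simp: gamma_dens_def)
  show ?thesis by (simp only: vanish) simp
next
  case True
  have "(\<integral>\<^sup>+ a. G (a * R) \<partial>beta_meas g)
      = ennreal (1 / Beta g g) * (\<integral>\<^sup>+ a. ennreal (beta_weight g a) * G (R * a) \<partial>lborel)"
    using nn_integral_beta_meas[OF assms(1), of "\<lambda>a. G (a * R)"] by (simp add: mult.commute)
  then show ?thesis
    using nn_integral_gamma_convolution_rescale[OF True assms(1) assms(2)] nn_integral_gamma_convolution[OF assms(1) True]
      Beta_diag_pos[OF assms(1)] gamma_split_const_pos[OF assms(1) True] True
    by (simp add: mult.assoc[symmetric] ennreal_mult[symmetric])
qed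

lemma nn_integral_gamma_convolution_resample:
  assumes "0 < g" and [measurable]: "G \<in> borel_measurable borel"
  shows "(\<integral>\<^sup>+ u. ennreal (gamma_dens g u * gamma_dens g (R - u)) * G u \<partial>lborel)
    = (\<integral>\<^sup>+ u. ennreal (gamma_dens g u * gamma_dens g (R - u)) * (\<integral>\<^sup>+ a. G (a * R) \<partial>beta_meas g) \<partial>lborel)"
  by (simp add: nn_integral_gamma_convolution_split[OF assms] nn_integral_multc)

section \<open>The conditional measure \<open>nuEN\<close>\<close>

interpretation lborel_product: product_sigma_finite "\<lambda>_::nat. lborel :: real measure"
  by standard

lemma measurable_into_PiM_lborel:
  assumes "\<And>j. j \<in> I \<Longrightarrow> (\<lambda>w. h w j) \<in> borel_measurable M"
    and "\<And>w j. w \<in> space M \<Longrightarrow> j \<notin> I \<Longrightarrow> h w j = undefined"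
  shows "h \<in> measurable M (PiM I (\<lambda>_. lborel :: real measure))"
proof -
  have "(\<lambda>w j. h w j) \<in> measurable M (PiM I (\<lambda>_. lborel :: real measure))"
    by (rule measurable_PiM_single') (use assms in \<open>auto simp: PiE_def extensional_def\<close>)
  then show ?thesis by simp
qed

lemma space_PiM_lborel:
  "x \<in> space (PiM I (\<lambda>_. lborel :: real measure)) \<longleftrightarrow> (\<forall>j. j \<notin> I \<longrightarrow> x j = undefined)"
  by (auto simp: space_PiM PiE_def extensional_def)

lemma nn_integral_PiM_lborel_insert2:
  fixes J :: "nat set" and H :: "(nat \<Rightarrow> real) \<Rightarrow> ennreal"
  assumes "finite J" "i \<notin> insert j J" "j \<notin> J"
    and [measurable]: "H \<in> borel_measurable (PiM (insert i (insert j J)) (\<lambda>_. lborel))"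
  shows "integral\<^sup>N (PiM (insert i (insert j J)) (\<lambda>_. lborel)) H =
      (\<integral>\<^sup>+ z. \<integral>\<^sup>+ v. \<integral>\<^sup>+ u. H (z(j := v, i := u)) \<partial>lborel \<partial>lborel \<partial>PiM J (\<lambda>_. lborel))"
proof -
  have "integral\<^sup>N (PiM (insert i (insert j J)) (\<lambda>_. lborel)) H =
     (\<integral>\<^sup>+ w. \<integral>\<^sup>+ u. H (w(i := u)) \<partial>lborel \<partial>PiM (insert j J) (\<lambda>_. lborel))"
    using assms by (subst lborel_product.product_nn_integral_insert) auto
  also have "\<dots> = (\<integral>\<^sup>+ z. \<integral>\<^sup>+ v. \<integral>\<^sup>+ u. H (z(j := v, i := u)) \<partial>lborel \<partial>lborel \<partial>PiM J (\<lambda>_. lborel))"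
    using assms by (subst lborel_product.product_nn_integral_insert) auto
  finally show ?thesis .
qed

lemma measurable_embed_pt[measurable]:
  assumes "0 < N"
  shows "embed_pt N E \<in> measurable (PiM {..<N - 1} (\<lambda>_. lborel)) (PiM {..<N} (\<lambda>_. lborel))"
proof (rule measurable_into_PiM_lborel)
  fix j assume "j \<in> {..<N}"
  have c: "(\<lambda>w::nat\<Rightarrow>real. w k) \<in> borel_measurable (PiM {..<N - 1} (\<lambda>_. lborel))" if "k < N - 1" for k
    using that measurable_component_singleton[of k "{..<N - 1}" "\<lambda>_. lborel"] by simp
  show "(\<lambda>w. embed_pt N E w j) \<in> borel_measurable (PiM {..<N - 1} (\<lambda>_. lborel))"
  proof (cases "j < N - 1")
    case True
    then show ?thesis using c[OF True] by (simp add: embed_pt_def)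
  next
    case False
    then have "(\<lambda>w. embed_pt N E w j) = (\<lambda>w. real N * E - (\<Sum>k<N - 1. w k))"
      using \<open>j \<in> {..<N}\<close> by (intro ext) (auto simp: embed_pt_def)
    then show ?thesis
      using c by (auto intro!: borel_measurable_diff borel_measurable_sum)
  qed
next
  fix w j assume "j \<notin> {..<N}" then show "embed_pt N E w j = undefined"
    using assms by (auto simp: embed_pt_def)
qed

lemma measurable_Tmap:
  assumes "i < N" "j < N"
  shows "(\<lambda>(x, a). Tmap i j a x)
    \<in> measurable (PiM {..<N} (\<lambda>_. lborel) \<Otimes>\<^sub>M borel) (PiM {..<N} (\<lambda>_. lborel))"
proof (rule measurable_into_PiM_lborel)
  fix k assume "k \<in> {..<N}"
  have c: "(\<lambda>w::(nat\<Rightarrow>real)\<times>real. fst w l) \<in> borel_measurable (PiM {..<N} (\<lambda>_. lborel) \<Otimes>\<^sub>M borel)"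
    if "l < N" for l
    using that measurable_compose[OF measurable_fst measurable_component_singleton[of l "{..<N}" "\<lambda>_. lborel"]]
    by simp
  have "(\<lambda>w. (case w of (x, a) \<Rightarrow> Tmap i j a x) k) =
      (if k = j then (\<lambda>w. (1 - snd w) * (fst w i + fst w j))
       else if k = i then (\<lambda>w. snd w * (fst w i + fst w j)) else (\<lambda>w. fst w k))"
    by (auto simp: Tmap_def split_beta')
  then show "(\<lambda>w. (case w of (x, a) \<Rightarrow> Tmap i j a x) k) \<in> borel_measurable (PiM {..<N} (\<lambda>_. lborel) \<Otimes>\<^sub>M borel)"
    using c assms \<open>k \<in> {..<N}\<close> by (auto intro!: borel_measurable_times borel_measurable_add borel_measurable_diff)
next
  fix w :: "(nat \<Rightarrow> real) \<times> real" and k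
  assume "w \<in> space (PiM {..<N} (\<lambda>_. lborel) \<Otimes>\<^sub>M borel)" "k \<notin> {..<N}"
  then show "(\<lambda>(x, a). Tmap i j a x) w k = undefined"
    using assms by (auto simp: Tmap_def space_pair_measure space_PiM_lborel split: prod.splits)
qed

lemma measurable_Tmap_comp[measurable]:
  assumes "i < N" "j < N"
    and [measurable]: "X \<in> measurable M (PiM {..<N} (\<lambda>_. lborel))" "A \<in> borel_measurable M"
  shows "(\<lambda>w. Tmap i j (A w) (X w)) \<in> measurable M (PiM {..<N} (\<lambda>_. lborel))"
  using measurable_compose[OF measurable_Pair[OF assms(3,4)] measurable_Tmap[OF assms(1,2)]] by simp

lemma borel_measurable_cond_dens[measurable]:
  assumes "0 < N"
  shows "cond_dens g N E \<in> borel_measurable (PiM {..<N - 1} (\<lambda>_. lborel))"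
proof -
  have "(\<lambda>x. embed_pt N E x i) \<in> borel_measurable (PiM {..<N - 1} (\<lambda>_. lborel))" if "i < N" for i
    using that measurable_compose[OF measurable_embed_pt[OF assms] measurable_component_singleton[of i "{..<N}" "\<lambda>_. lborel"]]
    by simp
  then show ?thesis unfolding cond_dens_def
    by (intro borel_measurable_prod measurable_compose[OF _ borel_measurable_gamma_dens]) auto
qed

lemma borel_measurable_nn_integral_resample:
  assumes "0 < g" "i < N" "j < N"
    and [measurable]: "F \<in> borel_measurable (PiM {..<N} (\<lambda>_. lborel))"
      "X \<in> measurable M (PiM {..<N} (\<lambda>_. lborel))"
  shows "(\<lambda>x. \<integral>\<^sup>+ a. F (Tmap i j a (X x)) \<partial>beta_meas g) \<in> borel_measurable M"
proof -
  interpret beta: prob_space "beta_meas g" by (rule prob_space_beta_meas[OF assms(1)])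
  have "(\<lambda>(x, a). F (Tmap i j a (X x))) \<in> borel_measurable (M \<Otimes>\<^sub>M beta_meas g)"
    using assms(2,3) by (simp add: split_beta') measurable
  from beta.borel_measurable_nn_integral[OF this] show ?thesis by simp
qed

lemma nn_integral_nuEN:
  assumes "0 < N" and [measurable]: "H \<in> borel_measurable (PiM {..<N} (\<lambda>_. lborel))"
  shows "(\<integral>\<^sup>+ x. H x \<partial>nuEN g E N)
    = (\<integral>\<^sup>+ y. ennreal (cond_dens g N E y) * H (embed_pt N E y) \<partial>PiM {..<N - 1} (\<lambda>_. lborel))
      / (\<integral>\<^sup>+ z. ennreal (cond_dens g N E z) \<partial>PiM {..<N - 1} (\<lambda>_. lborel))"
proof -
  note [measurable] = measurable_embed_pt[OF assms(1)] borel_measurable_cond_dens[OF assms(1)]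
  define Z where "Z = (\<integral>\<^sup>+ z. ennreal (cond_dens g N E z) \<partial>PiM {..<N - 1} (\<lambda>_. lborel))"
  have dens: "(\<lambda>y. ennreal (cond_dens g N E y) / Z) \<in> borel_measurable (PiM {..<N - 1} (\<lambda>_. lborel))"
    by measurable
  have "embed_pt N E \<in> measurable (density (PiM {..<N - 1} (\<lambda>_. lborel)) (\<lambda>y. ennreal (cond_dens g N E y) / Z))
      (PiM {..<N} (\<lambda>_. lborel))"
    by measurable
  then have "(\<integral>\<^sup>+ x. H x \<partial>nuEN g E N)
      = (\<integral>\<^sup>+ y. ennreal (cond_dens g N E y) / Z * H (embed_pt N E y) \<partial>PiM {..<N - 1} (\<lambda>_. lborel))"
    unfolding nuEN_def Z_def[symmetric]
    by (subst nn_integral_distr, assumption, simp, subst nn_integral_density[OF dens]) simp_all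
  also have "\<dots> = (\<integral>\<^sup>+ y. ennreal (cond_dens g N E y) * H (embed_pt N E y) / Z \<partial>PiM {..<N - 1} (\<lambda>_. lborel))"
    by (simp add: ennreal_times_divide mult.commute)
  also have "\<dots> = (\<integral>\<^sup>+ y. ennreal (cond_dens g N E y) * H (embed_pt N E y) \<partial>PiM {..<N - 1} (\<lambda>_. lborel)) / Z"
    by (rule nn_integral_divide) measurable
  finally show ?thesis unfolding Z_def .
qed

lemma AE_nuEN_pos:
  assumes "0 < N"
  shows "AE x in nuEN g E N. \<forall>j<N. 0 < x j"
proof -
  note [measurable] = measurable_embed_pt[OF assms] borel_measurable_cond_dens[OF assms]
  have "{x \<in> space (PiM {..<N} (\<lambda>_. lborel :: real measure)). \<forall>j<N. 0 < x j}
      = (\<Inter>j<N. {x \<in> space (PiM {..<N} (\<lambda>_. lborel :: real measure)). 0 < x j})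
        \<inter> space (PiM {..<N} (\<lambda>_. lborel :: real measure))"
    by auto
  also have "\<dots> \<in> sets (PiM {..<N} (\<lambda>_. lborel))"
  proof -
    have "{x \<in> space (PiM {..<N} (\<lambda>_. lborel :: real measure)). 0 < x j} \<in> sets (PiM {..<N} (\<lambda>_. lborel))"
      if "j < N" for j
      using that measurable_sets[OF measurable_component_singleton[of j "{..<N}" "\<lambda>_. lborel :: real measure"],
        of "{0<..}"]
      by (simp add: vimage_def Int_def conj_commute)
    then show ?thesis using assms by (intro sets.Int sets.top sets.finite_INT) auto
  qed
  finally have S: "{x \<in> space (PiM {..<N} (\<lambda>_. lborel :: real measure)). \<forall>j<N. 0 < x j}
    \<in> sets (PiM {..<N} (\<lambda>_. lborel))" .
  define Z where "Z = (\<integral>\<^sup>+ z. ennreal (cond_dens g N E z) \<partial>PiM {..<N - 1} (\<lambda>_. lborel))"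
  have dens: "(\<lambda>y. ennreal (cond_dens g N E y) / Z) \<in> borel_measurable (PiM {..<N - 1} (\<lambda>_. lborel))"
    by measurable
  have emb: "embed_pt N E \<in> measurable (density (PiM {..<N - 1} (\<lambda>_. lborel)) (\<lambda>y. ennreal (cond_dens g N E y) / Z))
      (PiM {..<N} (\<lambda>_. lborel))"
    by measurable
  show ?thesis unfolding nuEN_def Z_def[symmetric]
  proof (subst AE_distr_iff[OF emb S], subst AE_density[OF dens], rule AE_I2, intro impI allI)
    fix y j assume pos: "0 < ennreal (cond_dens g N E y) / Z" and j: "j < N"
    have "cond_dens g N E y \<noteq> 0"
    proof
      assume "cond_dens g N E y = 0" then show False using pos by simp
    qed
    then have "gamma_dens g (embed_pt N E y j) \<noteq> 0" using j unfolding cond_dens_def by auto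
    then show "0 < embed_pt N E y j" by (auto simp: gamma_dens_def split: if_splits)
  qed
qed

section \<open>Invariance of \<open>nuEN\<close> under resampling a bond\<close>

lemma nn_integral_lborel_shear:
  assumes [measurable]: "(\<lambda>(u, v). W u v) \<in> borel_measurable (borel \<Otimes>\<^sub>M (borel :: real measure))"
  shows "(\<integral>\<^sup>+ v. \<integral>\<^sup>+ u. W u v \<partial>lborel \<partial>lborel) = (\<integral>\<^sup>+ s. \<integral>\<^sup>+ u. W u (s - u) \<partial>lborel \<partial>lborel)"
proof -
  have "(\<integral>\<^sup>+ v. \<integral>\<^sup>+ u. W u v \<partial>lborel \<partial>lborel) = (\<integral>\<^sup>+ u. \<integral>\<^sup>+ v. W u v \<partial>lborel \<partial>lborel)"
    by (rule lborel_pair.Fubini') simp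
  also have "\<dots> = (\<integral>\<^sup>+ u. \<integral>\<^sup>+ s. W u (s - u) \<partial>lborel \<partial>lborel)"
  proof (rule nn_integral_cong)
    fix u :: real
    have "(\<integral>\<^sup>+ v. W u v \<partial>lborel) = ennreal \<bar>1\<bar> * (\<integral>\<^sup>+ s. W u (- u + 1 * s) \<partial>lborel)"
      by (rule nn_integral_real_affine) auto
    then show "(\<integral>\<^sup>+ v. W u v \<partial>lborel) = (\<integral>\<^sup>+ s. W u (s - u) \<partial>lborel)" by simp
  qed
  also have "\<dots> = (\<integral>\<^sup>+ s. \<integral>\<^sup>+ u. W u (s - u) \<partial>lborel \<partial>lborel)"
    by (rule lborel_pair.Fubini'[symmetric]) simp
  finally show ?thesis .
qed

lemma nn_integral_gamma_pair_resample:
  assumes g: "0 < g" and [measurable]: "\<Phi> \<in> borel_measurable borel" and \<Phi>_nonneg: "\<And>s. 0 \<le> \<Phi> s"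
    and Q[measurable]: "(\<lambda>(u, v). Q u v) \<in> borel_measurable (borel \<Otimes>\<^sub>M (borel :: real measure))"
  shows "(\<integral>\<^sup>+ v. \<integral>\<^sup>+ u. ennreal (gamma_dens g u * gamma_dens g v * \<Phi> (u + v)) * Q u v \<partial>lborel \<partial>lborel)
       = (\<integral>\<^sup>+ v. \<integral>\<^sup>+ u. ennreal (gamma_dens g u * gamma_dens g v * \<Phi> (u + v)) *
             (\<integral>\<^sup>+ a. Q (a * (u + v)) ((1 - a) * (u + v)) \<partial>beta_meas g) \<partial>lborel \<partial>lborel)"
    (is "?lhs = (\<integral>\<^sup>+ v. \<integral>\<^sup>+ u. ?w u v * ?R u v \<partial>lborel \<partial>lborel)")
proof -
  interpret beta: prob_space "beta_meas g" by (rule prob_space_beta_meas[OF g])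
  have "(\<lambda>(w, a). Q (a * (fst w + snd w)) ((1 - a) * (fst w + snd w)))
      \<in> borel_measurable ((borel \<Otimes>\<^sub>M borel) \<Otimes>\<^sub>M beta_meas g)"
    by (simp add: split_beta') measurable
  from beta.borel_measurable_nn_integral[OF this]
  have [measurable]: "(\<lambda>(u, v). ?R u v) \<in> borel_measurable (borel \<Otimes>\<^sub>M borel)"
    by (simp add: split_beta')
  have dens_factor: "ennreal (gamma_dens g u * gamma_dens g (s - u) * \<Phi> (u + (s - u))) =
      ennreal (\<Phi> s) * ennreal (gamma_dens g u * gamma_dens g (s - u))" for u s
    using g \<Phi>_nonneg by (simp add: ennreal_mult[symmetric] gamma_dens_nonneg mult.commute)
  have fibre: "(\<integral>\<^sup>+ u. ?w u (s - u) * Q u (s - u) \<partial>lborel) = (\<integral>\<^sup>+ u. ?w u (s - u) * ?R u (s - u) \<partial>lborel)"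
    for s
  proof -
    have [measurable]: "(\<lambda>u. Q u (s - u)) \<in> borel_measurable borel" by measurable
    have add_diff_cancel: "u + (s - u) = s" for u by simp
    have "(\<integral>\<^sup>+ u. ?w u (s - u) * Q u (s - u) \<partial>lborel)
        = ennreal (\<Phi> s) * (\<integral>\<^sup>+ u. ennreal (gamma_dens g u * gamma_dens g (s - u)) * Q u (s - u) \<partial>lborel)"
      unfolding dens_factor mult.assoc[of "ennreal (\<Phi> s)"] by (rule nn_integral_cmult) measurable
    also have "\<dots> = ennreal (\<Phi> s) * (\<integral>\<^sup>+ u. ennreal (gamma_dens g u * gamma_dens g (s - u)) *
        (\<integral>\<^sup>+ a. Q (a * s) (s - a * s) \<partial>beta_meas g) \<partial>lborel)"
      by (subst nn_integral_gamma_convolution_resample[OF g]) simp_all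
    also have "\<dots> = ennreal (\<Phi> s) * (\<integral>\<^sup>+ u. ennreal (gamma_dens g u * gamma_dens g (s - u)) *
        (\<integral>\<^sup>+ a. Q (a * s) ((1 - a) * s) \<partial>beta_meas g) \<partial>lborel)"
      by (simp add: left_diff_distrib)
    also have "\<dots> = (\<integral>\<^sup>+ u. ?w u (s - u) * ?R u (s - u) \<partial>lborel)"
      unfolding dens_factor unfolding mult.assoc[of "ennreal (\<Phi> s)"] add_diff_cancel
      by (rule nn_integral_cmult[symmetric]) measurable
    finally show ?thesis .
  qed
  have "?lhs = (\<integral>\<^sup>+ s. \<integral>\<^sup>+ u. ?w u (s - u) * Q u (s - u) \<partial>lborel \<partial>lborel)"
    by (rule nn_integral_lborel_shear) measurable
  also have "\<dots> = (\<integral>\<^sup>+ s. \<integral>\<^sup>+ u. ?w u (s - u) * ?R u (s - u) \<partial>lborel \<partial>lborel)"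
    by (simp only: fibre)
  also have "\<dots> = (\<integral>\<^sup>+ v. \<integral>\<^sup>+ u. ?w u v * ?R u v \<partial>lborel \<partial>lborel)"
    by (rule nn_integral_lborel_shear[symmetric]) measurable
  finally show ?thesis .
qed

text \<open>On the last
  bond the pair is \<open>(u, R - u)\<close> and Gamma splitting applies directly; on an inner bond both sites
  are free and the shear \<open>(u, v) \<mapsto> (u, u + v)\<close> leads back to it, the factor
  \<open>\<Phi> (u + v)\<close> accounting for the last site.\<close>
lemma nn_integral_cond_dens_resample_last:
  assumes g: "0 < g" and i: "N = Suc (Suc i)"
    and F[measurable]: "F \<in> borel_measurable (PiM {..<N} (\<lambda>_. lborel))"
  shows "(\<integral>\<^sup>+ y. ennreal (cond_dens g N E y) * F (embed_pt N E y) \<partial>PiM {..<N - 1} (\<lambda>_. lborel))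
       = (\<integral>\<^sup>+ y. ennreal (cond_dens g N E y) * (\<integral>\<^sup>+ a. F (Tmap i (Suc i) a (embed_pt N E y)) \<partial>beta_meas g) \<partial>PiM {..<N - 1} (\<lambda>_. lborel))"
proof -
  have N0: "0 < N" using i by simp
  note [measurable] = measurable_embed_pt[OF N0] borel_measurable_cond_dens[OF N0]
  have lessThan_eq: "{..<N - 1} = insert i {..<i}" using i by auto
  have "(\<lambda>y. \<integral>\<^sup>+ a. F (Tmap i (Suc i) a (embed_pt N E y)) \<partial>beta_meas g)
      \<in> borel_measurable (PiM {..<N - 1} (\<lambda>_. lborel))"
    using i by (intro borel_measurable_nn_integral_resample[OF g _ _ F measurable_embed_pt[OF N0]]) auto
  then have rhs_measurable: "(\<lambda>y. ennreal (cond_dens g N E y) * (\<integral>\<^sup>+ a. F (Tmap i (Suc i) a (embed_pt N E y)) \<partial>beta_meas g))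
      \<in> borel_measurable (PiM {..<N - 1} (\<lambda>_. lborel))"
    by measurable
  have lhs_measurable: "(\<lambda>y. ennreal (cond_dens g N E y) * F (embed_pt N E y)) \<in> borel_measurable (PiM {..<N - 1} (\<lambda>_. lborel))"
    by measurable
  show ?thesis
    unfolding lessThan_eq
  proof (subst lborel_product.product_nn_integral_insert, simp, simp, use lhs_measurable lessThan_eq in simp,
         subst lborel_product.product_nn_integral_insert, simp, simp, use rhs_measurable lessThan_eq in simp, rule nn_integral_cong)
    fix z assume z: "z \<in> space (Pi\<^sub>M {..<i} (\<lambda>_. lborel :: real measure))"
    define R where "R = real N * E - (\<Sum>k<i. z k)"
    define Pz where "Pz = (\<Prod>k<i. gamma_dens g (z k))"
    define pt where "pt u = (\<lambda>j. if j < i then z j else if j = i then u else if j = Suc i then R - u else undefined)" for u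
    have Pz_nonneg: "0 \<le> Pz" unfolding Pz_def using g by (intro prod_nonneg) (simp add: gamma_dens_nonneg)
    have embed_eq: "embed_pt N E (z(i := u)) = pt u" for u
    proof -
      have "(\<Sum>k<Suc i. (z(i := u)) k) = (\<Sum>k<i. z k) + u"
        by (simp add: sum.lessThan_Suc)
      then show ?thesis using i unfolding embed_pt_def pt_def R_def by (intro ext) auto
    qed
    have dens_eq: "cond_dens g N E (z(i := u)) = Pz * (gamma_dens g u * gamma_dens g (R - u))" for u
    proof -
      have "(\<Prod>j<i. gamma_dens g (pt u j)) = Pz" unfolding Pz_def pt_def by (intro prod.cong) auto
      then show ?thesis unfolding cond_dens_def embed_eq using i
        by (simp add: prod.lessThan_Suc pt_def mult.assoc)
    qed
    have Tmap_eq: "Tmap i (Suc i) a (pt u) = pt (a * R)" for a u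
      unfolding Tmap_def pt_def by (intro ext) (auto simp: algebra_simps)
    have pt_measurable[measurable]: "pt \<in> measurable borel (PiM {..<N} (\<lambda>_. lborel))"
    proof (rule measurable_into_PiM_lborel)
      fix j show "(\<lambda>u. pt u j) \<in> borel_measurable borel" unfolding pt_def by measurable
    next
      fix u j assume "j \<notin> {..<N}" then show "pt u j = undefined" using i unfolding pt_def by auto
    qed
    have F_pt_measurable: "(\<lambda>u. F (pt u)) \<in> borel_measurable borel" by measurable
    have "(\<integral>\<^sup>+ u. ennreal (cond_dens g N E (z(i := u))) * F (embed_pt N E (z(i := u))) \<partial>lborel)
        = (\<integral>\<^sup>+ u. ennreal Pz * (ennreal (gamma_dens g u * gamma_dens g (R - u)) * F (pt u)) \<partial>lborel)"
      using Pz_nonneg g by (intro nn_integral_cong) (simp add: dens_eq embed_eq ennreal_mult gamma_dens_nonneg mult.assoc)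
    also have "\<dots> = ennreal Pz * (\<integral>\<^sup>+ u. ennreal (gamma_dens g u * gamma_dens g (R - u)) * F (pt u) \<partial>lborel)"
      by (rule nn_integral_cmult) measurable
    also have "\<dots> = ennreal Pz * (\<integral>\<^sup>+ u. ennreal (gamma_dens g u * gamma_dens g (R - u)) * (\<integral>\<^sup>+ a. F (pt (a * R)) \<partial>beta_meas g) \<partial>lborel)"
      by (simp only: nn_integral_gamma_convolution_resample[OF g F_pt_measurable])
    also have "\<dots> = (\<integral>\<^sup>+ u. ennreal Pz * (ennreal (gamma_dens g u * gamma_dens g (R - u)) * (\<integral>\<^sup>+ a. F (pt (a * R)) \<partial>beta_meas g)) \<partial>lborel)"
      by (rule nn_integral_cmult[symmetric]) measurable
    also have "\<dots> = (\<integral>\<^sup>+ u. ennreal (cond_dens g N E (z(i := u))) * (\<integral>\<^sup>+ a. F (Tmap i (Suc i) a (embed_pt N E (z(i := u)))) \<partial>beta_meas g) \<partial>lborel)"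
      using Pz_nonneg g by (intro nn_integral_cong) (simp add: dens_eq embed_eq Tmap_eq ennreal_mult gamma_dens_nonneg mult.assoc)
    finally show "(\<integral>\<^sup>+ u. ennreal (cond_dens g N E (z(i := u))) * F (embed_pt N E (z(i := u))) \<partial>lborel)
        = (\<integral>\<^sup>+ u. ennreal (cond_dens g N E (z(i := u))) * (\<integral>\<^sup>+ a. F (Tmap i (Suc i) a (embed_pt N E (z(i := u)))) \<partial>beta_meas g) \<partial>lborel)" .
  qed
qed

lemma nn_integral_cond_dens_resample_inner:
  assumes g: "0 < g" and i: "Suc i < N - 1"
    and F[measurable]: "F \<in> borel_measurable (PiM {..<N} (\<lambda>_. lborel))"
  shows "(\<integral>\<^sup>+ y. ennreal (cond_dens g N E y) * F (embed_pt N E y) \<partial>PiM {..<N - 1} (\<lambda>_. lborel))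
       = (\<integral>\<^sup>+ y. ennreal (cond_dens g N E y) * (\<integral>\<^sup>+ a. F (Tmap i (Suc i) a (embed_pt N E y)) \<partial>beta_meas g) \<partial>PiM {..<N - 1} (\<lambda>_. lborel))"
proof -
  define n where "n = N - 1"
  have N_eq: "N = Suc n" and i': "Suc i < n" using i unfolding n_def by auto
  have N0: "0 < N" using i by simp
  note [measurable] = measurable_embed_pt[OF N0] borel_measurable_cond_dens[OF N0]
  define J where "J = {..<n} - {i, Suc i}"
  have J: "finite J" "i \<notin> insert (Suc i) J" "Suc i \<notin> J" unfolding J_def by auto
  have lessThan_eq: "{..<N - 1} = insert i (insert (Suc i) J)" using i' unfolding J_def n_def[symmetric] by auto
  have "(\<lambda>y. \<integral>\<^sup>+ a. F (Tmap i (Suc i) a (embed_pt N E y)) \<partial>beta_meas g)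
      \<in> borel_measurable (PiM {..<N - 1} (\<lambda>_. lborel))"
    using i by (intro borel_measurable_nn_integral_resample[OF g _ _ F measurable_embed_pt[OF N0]]) auto
  then have rhs_measurable: "(\<lambda>y. ennreal (cond_dens g N E y) * (\<integral>\<^sup>+ a. F (Tmap i (Suc i) a (embed_pt N E y)) \<partial>beta_meas g))
      \<in> borel_measurable (PiM {..<N - 1} (\<lambda>_. lborel))"
    by measurable
  have lhs_measurable: "(\<lambda>y. ennreal (cond_dens g N E y) * F (embed_pt N E y)) \<in> borel_measurable (PiM {..<N - 1} (\<lambda>_. lborel))"
    by measurable
  show ?thesis
    unfolding lessThan_eq
  proof (subst (1 2) nn_integral_PiM_lborel_insert2, use J lhs_measurable rhs_measurable lessThan_eq in simp_all, rule nn_integral_cong)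
    fix z assume z: "z \<in> space (Pi\<^sub>M J (\<lambda>_. lborel :: real measure))"
    define R where "R = real N * E - (\<Sum>k\<in>J. z k)"
    define Pz where "Pz = (\<Prod>k\<in>J. gamma_dens g (z k))"
    define pt where "pt u v = (\<lambda>j. if j < n then (if j = i then u else if j = Suc i then v else z j)
        else if j = n then R - u - v else undefined)" for u v
    define \<Phi> where "\<Phi> s = Pz * gamma_dens g (R - s)" for s
    have Pz_nonneg: "0 \<le> Pz" unfolding Pz_def using g by (intro prod_nonneg) (simp add: gamma_dens_nonneg)
    have \<Phi>_nonneg: "0 \<le> \<Phi> s" for s unfolding \<Phi>_def using Pz_nonneg g by (simp add: gamma_dens_nonneg)
    have J_insert: "{..<n} = insert i (insert (Suc i) J)" using lessThan_eq N_eq by simp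
    have embed_eq: "embed_pt N E (z(Suc i := v, i := u)) = pt u v" for u v
    proof -
      have "(\<Sum>k<n. (z(Suc i := v, i := u)) k) = u + (v + (\<Sum>k\<in>J. (z(Suc i := v, i := u)) k))"
        unfolding J_insert using J by (simp add: sum.insert)
      also have "(\<Sum>k\<in>J. (z(Suc i := v, i := u)) k) = (\<Sum>k\<in>J. z k)"
        using J by (intro sum.cong) auto
      finally have "(\<Sum>k<n. (z(Suc i := v, i := u)) k) = u + (v + (\<Sum>k\<in>J. z k))" .
      then show ?thesis using N_eq i' unfolding embed_pt_def pt_def R_def by (intro ext) auto
    qed
    have dens_eq: "cond_dens g N E (z(Suc i := v, i := u)) = gamma_dens g u * gamma_dens g v * \<Phi> (u + v)" for u v
    proof -
      have "(\<Prod>j<n. gamma_dens g (pt u v j)) = gamma_dens g u * (gamma_dens g v * (\<Prod>j\<in>J. gamma_dens g (pt u v j)))"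
        unfolding J_insert using J i' by (simp add: prod.insert pt_def)
      also have "(\<Prod>j\<in>J. gamma_dens g (pt u v j)) = Pz"
        unfolding Pz_def pt_def J_def by (intro prod.cong) auto
      finally have "(\<Prod>j<n. gamma_dens g (pt u v j)) = gamma_dens g u * (gamma_dens g v * Pz)" .
      moreover have "cond_dens g N E (z(Suc i := v, i := u)) = (\<Prod>j<N. gamma_dens g (pt u v j))"
        by (simp add: cond_dens_def embed_eq)
      moreover have "pt u v n = R - (u + v)" by (simp add: pt_def)
      ultimately show ?thesis unfolding N_eq
        by (simp add: prod.lessThan_Suc \<Phi>_def algebra_simps)
    qed
    have Tmap_eq: "Tmap i (Suc i) a (pt u v) = pt (a * (u + v)) ((1 - a) * (u + v))" for a u v
      unfolding Tmap_def pt_def using i' by (intro ext) (auto simp: algebra_simps)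
    have pt_measurable[measurable]: "(\<lambda>(u, v). pt u v) \<in> measurable (borel \<Otimes>\<^sub>M borel) (PiM {..<N} (\<lambda>_. lborel))"
    proof (rule measurable_into_PiM_lborel)
      fix j show "(\<lambda>w. (case w of (u, v) \<Rightarrow> pt u v) j) \<in> borel_measurable (borel \<Otimes>\<^sub>M borel)"
        unfolding pt_def by (simp add: split_beta') measurable
    next
      fix w :: "real \<times> real" and j assume "j \<notin> {..<N}"
      then show "(\<lambda>(u, v). pt u v) w j = undefined" using N_eq unfolding pt_def by (auto simp: split_beta')
    qed
    have F_pt_measurable: "(\<lambda>(u, v). F (pt u v)) \<in> borel_measurable (borel \<Otimes>\<^sub>M borel)"
      using measurable_compose[OF pt_measurable F] by (simp add: split_beta')
    have \<Phi>_measurable: "\<Phi> \<in> borel_measurable borel" unfolding \<Phi>_def by measurable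
    have "(\<integral>\<^sup>+ v. \<integral>\<^sup>+ u. ennreal (cond_dens g N E (z(Suc i := v, i := u))) * F (embed_pt N E (z(Suc i := v, i := u))) \<partial>lborel \<partial>lborel)
        = (\<integral>\<^sup>+ v. \<integral>\<^sup>+ u. ennreal (gamma_dens g u * gamma_dens g v * \<Phi> (u + v)) * F (pt u v) \<partial>lborel \<partial>lborel)"
      by (simp add: dens_eq embed_eq)
    also have "\<dots> = (\<integral>\<^sup>+ v. \<integral>\<^sup>+ u. ennreal (gamma_dens g u * gamma_dens g v * \<Phi> (u + v)) *
             (\<integral>\<^sup>+ a. F (pt (a * (u + v)) ((1 - a) * (u + v))) \<partial>beta_meas g) \<partial>lborel \<partial>lborel)"
      by (rule nn_integral_gamma_pair_resample[OF g \<Phi>_measurable \<Phi>_nonneg, where Q="\<lambda>u v. F (pt u v)"]) (use F_pt_measurable in simp)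
    also have "\<dots> = (\<integral>\<^sup>+ v. \<integral>\<^sup>+ u. ennreal (cond_dens g N E (z(Suc i := v, i := u))) *
         (\<integral>\<^sup>+ a. F (Tmap i (Suc i) a (embed_pt N E (z(Suc i := v, i := u)))) \<partial>beta_meas g) \<partial>lborel \<partial>lborel)"
      by (simp add: dens_eq embed_eq Tmap_eq)
    finally show "(\<integral>\<^sup>+ v. \<integral>\<^sup>+ u. ennreal (cond_dens g N E (z(Suc i := v, i := u))) * F (embed_pt N E (z(Suc i := v, i := u))) \<partial>lborel \<partial>lborel)
        = (\<integral>\<^sup>+ v. \<integral>\<^sup>+ u. ennreal (cond_dens g N E (z(Suc i := v, i := u))) *
         (\<integral>\<^sup>+ a. F (Tmap i (Suc i) a (embed_pt N E (z(Suc i := v, i := u)))) \<partial>beta_meas g) \<partial>lborel \<partial>lborel)" .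
  qed
qed

lemma nn_integral_cond_dens_resample:
  assumes g: "0 < g" and i: "Suc i < N"
    and F[measurable]: "F \<in> borel_measurable (PiM {..<N} (\<lambda>_. lborel))"
  shows "(\<integral>\<^sup>+ y. ennreal (cond_dens g N E y) * F (embed_pt N E y) \<partial>PiM {..<N - 1} (\<lambda>_. lborel))
       = (\<integral>\<^sup>+ y. ennreal (cond_dens g N E y) * (\<integral>\<^sup>+ a. F (Tmap i (Suc i) a (embed_pt N E y)) \<partial>beta_meas g) \<partial>PiM {..<N - 1} (\<lambda>_. lborel))"
proof (cases "N = Suc (Suc i)")
  case True then show ?thesis by (rule nn_integral_cond_dens_resample_last[OF g _ F])
next
  case False then have "Suc i < N - 1" using i by auto
  then show ?thesis by (rule nn_integral_cond_dens_resample_inner[OF g _ F])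
qed

lemma nn_integral_nuEN_resample:
  assumes g: "0 < g" and i: "Suc i < N"
    and F[measurable]: "F \<in> borel_measurable (PiM {..<N} (\<lambda>_. lborel))"
  shows "(\<integral>\<^sup>+ x. F x \<partial>nuEN g E N) = (\<integral>\<^sup>+ x. (\<integral>\<^sup>+ a. F (Tmap i (Suc i) a x) \<partial>beta_meas g) \<partial>nuEN g E N)"
proof -
  have N0: "0 < N" using i by simp
  have "(\<lambda>x. \<integral>\<^sup>+ a. F (Tmap i (Suc i) a x) \<partial>beta_meas g) \<in> borel_measurable (PiM {..<N} (\<lambda>_. lborel))"
    using i by (intro borel_measurable_nn_integral_resample[OF g _ _ F measurable_ident_sets]) auto
  then show ?thesis
    by (simp only: nn_integral_nuEN[OF N0 F] nn_integral_nuEN[OF N0] nn_integral_cond_dens_resample[OF g i F])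
qed

section \<open>The two-site measure\<close>

definition two_site_pt :: "real \<Rightarrow> real \<Rightarrow> nat \<Rightarrow> real" where
  "two_site_pt t a = (\<lambda>j. if j = 0 then a * t else if j = 1 then (1 - a) * t else undefined)"

lemma measurable_two_site_pt[measurable]: "two_site_pt t \<in> measurable borel (PiM {..<2} (\<lambda>_. lborel))"
  by (rule measurable_into_PiM_lborel) (auto simp: two_site_pt_def)

lemma nn_integral_PiM_lborel_singleton:
  assumes [measurable]: "H \<in> borel_measurable (PiM {..<1::nat} (\<lambda>_. lborel :: real measure))"
  shows "(\<integral>\<^sup>+ y. H y \<partial>PiM {..<1::nat} (\<lambda>_. lborel)) = (\<integral>\<^sup>+ u. H (\<lambda>j. if j = 0 then u else undefined) \<partial>lborel)"
proof -
  have u: "{..<1::nat} = {0}" by auto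
  have mj: "(\<lambda>u::real. (\<lambda>j::nat. if j = 0 then u else undefined)) \<in> measurable borel (PiM {..<1::nat} (\<lambda>_. lborel))"
    by (rule measurable_into_PiM_lborel) auto
  have "(\<integral>\<^sup>+ y. H y \<partial>PiM {..<1::nat} (\<lambda>_. lborel)) = (\<integral>\<^sup>+ y. H (\<lambda>j. if j = 0 then y 0 else undefined) \<partial>PiM {0::nat} (\<lambda>_. lborel))"
    unfolding u
  proof (rule nn_integral_cong)
    fix y assume "y \<in> space (PiM {0::nat} (\<lambda>_. lborel :: real measure))"
    then have "y = (\<lambda>j. if j = 0 then y 0 else undefined)" by (auto simp: space_PiM_lborel)
    then show "H y = H (\<lambda>j. if j = 0 then y 0 else undefined)" by simp
  qed
  also have "\<dots> = (\<integral>\<^sup>+ u. H (\<lambda>j. if j = 0 then u else undefined) \<partial>lborel)"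
  proof -
    have "(\<lambda>u. H (\<lambda>j. if j = 0 then u else undefined)) \<in> borel_measurable borel"
      using measurable_compose[OF mj assms] by simp
    then show ?thesis
      by (subst lborel_product.product_nn_integral_singleton[where f="\<lambda>u. H (\<lambda>j. if j = 0 then u else undefined)"]) auto
  qed
  finally show ?thesis .
qed

lemma nn_integral_nuEN_two_site:
  assumes g: "0 < g" and t: "0 < t" and [measurable]: "F \<in> borel_measurable (PiM {..<2} (\<lambda>_. lborel))"
  shows "(\<integral>\<^sup>+ x. F x \<partial>nuEN g (t / 2) 2) = (\<integral>\<^sup>+ a. F (two_site_pt t a) \<partial>beta_meas g)"
proof -
  define pt where "pt u = (\<lambda>j::nat. if j = 0 then u else if j = 1 then t - u else undefined)" for u
  have embed_eq: "embed_pt 2 (t / 2) (\<lambda>j. if j = 0 then u else undefined) = pt u" for u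
    unfolding embed_pt_def pt_def by (intro ext) auto
  have dens_eq: "cond_dens g 2 (t / 2) (\<lambda>j. if j = 0 then u else undefined) = gamma_dens g u * gamma_dens g (t - u)" for u
    unfolding cond_dens_def embed_eq by (simp add: pt_def numeral_2_eq_2 prod.lessThan_Suc)
  have pt_measurable[measurable]: "pt \<in> measurable borel (PiM {..<2} (\<lambda>_. lborel))"
    by (rule measurable_into_PiM_lborel) (auto simp: pt_def)
  have N0: "0 < (2::nat)" by simp
  note [measurable] = measurable_embed_pt[OF N0, of "t/2"] borel_measurable_cond_dens[OF N0, of g "t/2"]
  have chart_integral: "(\<integral>\<^sup>+ y. ennreal (cond_dens g 2 (t/2) y) * H (embed_pt 2 (t/2) y) \<partial>PiM {..<2 - 1} (\<lambda>_. lborel))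
      = (\<integral>\<^sup>+ u. ennreal (gamma_dens g u * gamma_dens g (t - u)) * H (pt u) \<partial>lborel)"
    if [measurable]: "H \<in> borel_measurable (PiM {..<2} (\<lambda>_. lborel))" for H
  proof -
    have "(\<lambda>y. ennreal (cond_dens g 2 (t/2) y) * H (embed_pt 2 (t/2) y)) \<in> borel_measurable (PiM {..<2 - 1} (\<lambda>_. lborel))"
      by measurable
    moreover have e: "{..<(2::nat) - 1} = {..<1}" by simp
    ultimately have m1: "(\<lambda>y. ennreal (cond_dens g 2 (t/2) y) * H (embed_pt 2 (t/2) y)) \<in> borel_measurable (PiM {..<1} (\<lambda>_. lborel))"
      by simp
    show ?thesis unfolding e nn_integral_PiM_lborel_singleton[OF m1] embed_eq dens_eq by simp
  qed
  define Zg where "Zg = (\<integral>\<^sup>+ u. ennreal (gamma_dens g u * gamma_dens g (t - u)) \<partial>lborel)"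
  have Zg: "Zg \<noteq> 0" "Zg \<noteq> \<top>" unfolding Zg_def using nn_integral_gamma_convolution[OF g t] gamma_split_const_pos[OF g t] Beta_diag_pos[OF g] t by auto
  have F_pt_measurable: "(\<lambda>u. F (pt u)) \<in> borel_measurable borel" by measurable
  have "(\<integral>\<^sup>+ x. F x \<partial>nuEN g (t / 2) 2) = (Zg * (\<integral>\<^sup>+ a. F (pt (a * t)) \<partial>beta_meas g)) / Zg"
    using nn_integral_nuEN[of 2 F g "t / 2"] chart_integral[of F] chart_integral[of "\<lambda>_. 1"] nn_integral_gamma_convolution_split[OF g F_pt_measurable, of t]
    by (simp add: Zg_def)
  also have "\<dots> = (\<integral>\<^sup>+ a. F (pt (a * t)) \<partial>beta_meas g)"
    using Zg by (subst mult.commute) (rule ennreal_mult_divide_eq)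
  also have "\<dots> = (\<integral>\<^sup>+ a. F (two_site_pt t a) \<partial>beta_meas g)"
  proof -
    have "pt (a * t) = two_site_pt t a" for a unfolding pt_def two_site_pt_def by (intro ext) (auto simp: algebra_simps)
    then show ?thesis by simp
  qed
  finally show ?thesis .
qed

lemma nuEN_two_site_eq_distr:
  assumes g: "0 < g" and t: "0 < t"
  shows "nuEN g (t / 2) 2 = distr (beta_meas g) (PiM {..<2} (\<lambda>_. lborel)) (two_site_pt t)"
proof (rule measure_eqI)
  show "sets (nuEN g (t / 2) 2) = sets (distr (beta_meas g) (PiM {..<2} (\<lambda>_. lborel)) (two_site_pt t))"
    by (simp add: nuEN_def)
next
  fix A assume A: "A \<in> sets (nuEN g (t / 2) 2)"
  then have A': "A \<in> sets (PiM {..<2} (\<lambda>_. lborel))" by (simp add: nuEN_def)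
  have "emeasure (nuEN g (t / 2) 2) A = (\<integral>\<^sup>+ x. indicator A x \<partial>nuEN g (t / 2) 2)"
    using A by simp
  also have "\<dots> = (\<integral>\<^sup>+ a. indicator A (two_site_pt t a) \<partial>beta_meas g)"
    using A' by (intro nn_integral_nuEN_two_site[OF g t]) simp
  also have "\<dots> = (\<integral>\<^sup>+ a. indicator (two_site_pt t -` A \<inter> space (beta_meas g)) a \<partial>beta_meas g)"
    by (intro nn_integral_cong) (auto split: split_indicator)
  also have "\<dots> = emeasure (beta_meas g) (two_site_pt t -` A \<inter> space (beta_meas g))"
    using measurable_sets[OF measurable_two_site_pt A', of t] by (intro nn_integral_indicator) simp
  also have "\<dots> = emeasure (distr (beta_meas g) (PiM {..<2} (\<lambda>_. lborel)) (two_site_pt t)) A"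
    using A' by (subst emeasure_distr) auto
  finally show "emeasure (nuEN g (t / 2) 2) A = emeasure (distr (beta_meas g) (PiM {..<2} (\<lambda>_. lborel)) (two_site_pt t)) A" .
qed

section \<open>Measurability of the exchange kernel\<close>

lemma exchange_modelD:
  assumes "exchange_model Lam P" and "0 < a" "0 < b"
  shows "prob_space (P a b)" "sets (P a b) = sets borel"
  using assms unfolding exchange_model_def by blast+

lemma continuous_on_exchange_model_integral:
  fixes h :: "real \<Rightarrow> real"
  assumes "exchange_model Lam P" and "continuous_on {0..1} h"
  shows "continuous_on {p. 0 < fst p \<and> 0 < snd p} (\<lambda>p. \<integral>x. h x \<partial>P (fst p) (snd p))"
proof -
  from assms(1) have "\<forall>h::real \<Rightarrow> real. continuous_on {0..1} h \<longrightarrow>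
      continuous_on {p. 0 < fst p \<and> 0 < snd p} (\<lambda>p. \<integral>x. h x \<partial>P (fst p) (snd p))"
    unfolding exchange_model_def by (elim conjE) assumption
  then show ?thesis using assms(2) by blast
qed

lemma sets_open_quadrant[measurable]: "{p::real \<times> real. 0 < fst p \<and> 0 < snd p} \<in> sets borel"
  by (rule borel_open) (intro open_Collect_conj open_Collect_less continuous_intros)

definition ramp :: "real \<Rightarrow> nat \<Rightarrow> real \<Rightarrow> real" where
  "ramp c n x = max 0 (min 1 (1 - real n * (x - c)))"

lemma continuous_on_ramp: "continuous_on A (ramp c n)"
  unfolding ramp_def by (intro continuous_intros)

lemma borel_measurable_ramp[measurable]: "ramp c n \<in> borel_measurable borel"
  unfolding ramp_def by measurable

lemma abs_ramp_le_1: "\<bar>ramp c n x\<bar> \<le> 1"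
  by (simp add: ramp_def)

lemma ramp_tendsto_indicator: "(\<lambda>n. ramp c n x) \<longlonglongrightarrow> indicator {..c} x"
proof (cases "x \<le> c")
  case True
  then have "ramp c n x = 1" for n
    by (simp add: ramp_def mult_nonneg_nonpos)
  with True show ?thesis by simp
next
  case False
  obtain n0 :: nat where n0: "1 / (x - c) \<le> real n0" using real_arch_simple by blast
  have "eventually (\<lambda>n. ramp c n x = 0) sequentially"
    unfolding eventually_sequentially
  proof (intro exI allI impI)
    fix n assume "n0 \<le> n"
    then have "1 / (x - c) \<le> real n" using n0 by linarith
    then have "1 \<le> real n * (x - c)" using False by (simp add: field_simps)
    then show "ramp c n x = 0" by (simp add: ramp_def)
  qed
  then have "(\<lambda>n. ramp c n x) \<longlonglongrightarrow> 0" by (rule tendsto_eventually)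
  with False show ?thesis by simp
qed

lemma borel_measurable_exchange_model_atMost:
  fixes c :: real
  assumes em: "exchange_model Lam P"
  shows "(\<lambda>p. indicator {p. 0 < fst p \<and> 0 < snd p} p * measure (P (fst p) (snd p)) {..c})
    \<in> borel_measurable borel"
proof (rule borel_measurable_LIMSEQ_real)
  fix n
  show "(\<lambda>p. indicator {p. 0 < fst p \<and> 0 < snd p} p * (\<integral>x. ramp c n x \<partial>P (fst p) (snd p)))
      \<in> borel_measurable borel"
    using borel_measurable_continuous_on_indicator[OF sets_open_quadrant
        continuous_on_exchange_model_integral[OF em continuous_on_ramp]]
    by simp
next
  fix p :: "real \<times> real"
  show "(\<lambda>n. indicator {p. 0 < fst p \<and> 0 < snd p} p * (\<integral>x. ramp c n x \<partial>P (fst p) (snd p)))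
      \<longlonglongrightarrow> indicator {p. 0 < fst p \<and> 0 < snd p} p * measure (P (fst p) (snd p)) {..c}"
  proof (cases "0 < fst p \<and> 0 < snd p")
    case True
    interpret prob_space "P (fst p) (snd p)" using exchange_modelD(1)[OF em] True by blast
    have [measurable_cong]: "sets (P (fst p) (snd p)) = sets borel"
      using exchange_modelD(2)[OF em] True by blast
    have "(\<lambda>n. \<integral>x. ramp c n x \<partial>P (fst p) (snd p)) \<longlonglongrightarrow> (\<integral>x. indicator {..c} x \<partial>P (fst p) (snd p))"
      by (rule integral_dominated_convergence[where w="\<lambda>_. 1"])
        (auto intro: ramp_tendsto_indicator abs_ramp_le_1)
    then show ?thesis using True by simp
  qed simp
qed

definition exchange_kernel :: "(real \<Rightarrow> real \<Rightarrow> real measure) \<Rightarrow> real \<times> real \<Rightarrow> real measure" where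
  "exchange_kernel P p = (if 0 < fst p \<and> 0 < snd p then P (fst p) (snd p) else return borel 0)"

lemma measurable_exchange_kernel:
  assumes em: "exchange_model Lam P"
  shows "exchange_kernel P \<in> measurable borel (subprob_algebra borel)"
proof -
  define Q where "Q = {p::real \<times> real. 0 < fst p \<and> 0 < snd p}"
  have prob: "prob_space (exchange_kernel P p)" for p
    using exchange_modelD(1)[OF em] by (auto simp: exchange_kernel_def intro: prob_space_return)
  have sets_eq: "sets (exchange_kernel P p) = sets borel" for p
    using exchange_modelD(2)[OF em] by (auto simp: exchange_kernel_def)
  have "emeasure (exchange_kernel P p) {..c}
      = ennreal (indicator Q p * measure (P (fst p) (snd p)) {..c} + indicator (- Q) p * indicator {..c} (0::real))"
    for p c
  proof (cases "p \<in> Q")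
    case True
    then have "0 < fst p" "0 < snd p" unfolding Q_def by auto
    then interpret prob_space "P (fst p) (snd p)" by (rule exchange_modelD(1)[OF em])
    show ?thesis
      using True exchange_modelD(2)[OF em \<open>0 < fst p\<close> \<open>0 < snd p\<close>]
      by (simp add: exchange_kernel_def Q_def emeasure_eq_measure)
  qed (auto simp: exchange_kernel_def Q_def split: split_indicator)
  then have atMost: "(\<lambda>p. emeasure (exchange_kernel P p) {..c}) \<in> borel_measurable borel" for c
    using borel_measurable_exchange_model_atMost[OF em, of c] unfolding Q_def by simp
  show ?thesis
  proof (rule measurable_subprob_algebra_generated[where \<Omega>=UNIV and G="range (\<lambda>c. {..c::real})"])
    show "sets borel = sigma_sets UNIV (range (\<lambda>c. {..c::real}))"
      by (subst borel_eq_atMost) (simp add: sets_measure_of)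
    show "Int_stable (range (\<lambda>c. {..c::real}))"
      unfolding Int_stable_def by (auto simp: Int_atMost)
    show "subprob_space (exchange_kernel P a)" for a
      using prob by (rule prob_space_imp_subprob_space)
    show "(\<lambda>a. emeasure (exchange_kernel P a) UNIV) \<in> borel_measurable borel"
      using prob_space.emeasure_space_1[OF prob] sets_eq_imp_space_eq[OF sets_eq] by simp
  qed (use sets_eq atMost in auto)
qed

lemma borel_measurable_exchange_model_integral:
  assumes em: "exchange_model Lam P"
    and [measurable]: "f1 \<in> borel_measurable M" "f2 \<in> borel_measurable M"
    and G: "(\<lambda>(x, b). G x b) \<in> borel_measurable (M \<Otimes>\<^sub>M borel)"
  shows "(\<lambda>x. if 0 < f1 x \<and> 0 < f2 x then ennreal (Lam (f1 x) (f2 x)) * (\<integral>\<^sup>+ b. G x b \<partial>P (f1 x) (f2 x)) else 0)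
     \<in> borel_measurable M"
proof -
  define Q where "Q = {p::real \<times> real. 0 < fst p \<and> 0 < snd p}"
  have "(\<lambda>x. exchange_kernel P (f1 x, f2 x)) \<in> measurable M (subprob_algebra borel)"
    using measurable_compose[OF _ measurable_exchange_kernel[OF em], of "\<lambda>x. (f1 x, f2 x)" M] by simp
  from nn_integral_measurable_subprob_algebra2[OF G this]
  have [measurable]: "(\<lambda>x. \<integral>\<^sup>+ b. G x b \<partial>exchange_kernel P (f1 x, f2 x)) \<in> borel_measurable M" .
  have "(\<lambda>p. indicator Q p * Lam (fst p) (snd p)) \<in> borel_measurable borel"
    using borel_measurable_continuous_on_indicator[OF sets_open_quadrant, of "\<lambda>p. Lam (fst p) (snd p)"] em
    unfolding exchange_model_def Q_def by simp
  from measurable_compose[OF _ this, of "\<lambda>x. (f1 x, f2 x)" M]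
  have [measurable]: "(\<lambda>x. indicator Q (f1 x, f2 x) * Lam (f1 x) (f2 x)) \<in> borel_measurable M"
    by simp
  have "(\<lambda>x. if 0 < f1 x \<and> 0 < f2 x then ennreal (Lam (f1 x) (f2 x)) * (\<integral>\<^sup>+ b. G x b \<partial>P (f1 x) (f2 x)) else 0)
    = (\<lambda>x. if 0 < f1 x \<and> 0 < f2 x then ennreal (indicator Q (f1 x, f2 x) * Lam (f1 x) (f2 x))
             * (\<integral>\<^sup>+ b. G x b \<partial>exchange_kernel P (f1 x, f2 x)) else 0)"
    by (auto simp: exchange_kernel_def Q_def)
  also have "\<dots> \<in> borel_measurable M" by measurable
  finally show ?thesis .
qed

section \<open>Comparison bond by bond\<close>

definition bond_update :: "(nat \<Rightarrow> real) \<Rightarrow> nat \<Rightarrow> (nat \<Rightarrow> real) \<Rightarrow> nat \<Rightarrow> real" where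
  "bond_update x i y = x(i := y 0, Suc i := y 1)"

lemma measurable_bond_update:
  assumes "x \<in> space (PiM {..<N} (\<lambda>_. lborel))" "Suc i < N"
  shows "bond_update x i \<in> measurable (PiM {..<2} (\<lambda>_. lborel)) (PiM {..<N} (\<lambda>_. lborel))"
proof (rule measurable_into_PiM_lborel)
  have c: "(\<lambda>w::nat\<Rightarrow>real. w k) \<in> borel_measurable (PiM {..<2} (\<lambda>_. lborel))" if "k < 2" for k
    using that measurable_component_singleton[of k "{..<2}" "\<lambda>_. lborel"] by simp
  fix j show "(\<lambda>w. bond_update x i w j) \<in> borel_measurable (PiM {..<2} (\<lambda>_. lborel))"
    unfolding bond_update_def using c[of 0] c[of 1] by (cases "j = Suc i"; cases "j = i") auto
next
  fix w j assume "j \<notin> {..<N}"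
  then show "bond_update x i w j = undefined" using assms by (auto simp: bond_update_def space_PiM_lborel)
qed

lemma Tmap_bond_update: "Tmap i (Suc i) a (bond_update x i y) = bond_update x i (Tmap 0 1 a y)"
  unfolding Tmap_def bond_update_def by (intro ext) auto

lemma bond_update_two_site_pt: "bond_update x i (two_site_pt (x i + x (Suc i)) a) = Tmap i (Suc i) a x"
  unfolding Tmap_def bond_update_def two_site_pt_def by (intro ext) auto

lemma Tmap_Tmap: "i \<noteq> j \<Longrightarrow> Tmap i j b (Tmap i j a x) = Tmap i j b x"
  unfolding Tmap_def by (intro ext) (auto simp: algebra_simps)

lemma Tmap_sum: "i \<noteq> j \<Longrightarrow> Tmap i j a x i + Tmap i j a x j = x i + x j"
  unfolding Tmap_def by (simp add: algebra_simps)

definition bond_energy :: "(real \<Rightarrow> real \<Rightarrow> real) \<Rightarrow> (real \<Rightarrow> real \<Rightarrow> real measure)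
    \<Rightarrow> ((nat \<Rightarrow> real) \<Rightarrow> real) \<Rightarrow> nat \<Rightarrow> (nat \<Rightarrow> real) \<Rightarrow> ennreal" where
  "bond_energy Lam P f i y = ennreal (Lam (y i) (y (Suc i))) *
     (\<integral>\<^sup>+ b. ennreal ((f (Tmap i (Suc i) b y) - f y)\<^sup>2) \<partial>P (y i) (y (Suc i)))"

text \<open>Off the open quadrant \<open>P\<close> is unconstrained; cutting it off there makes the bond energy
  measurable without changing its \<open>nuEN\<close>-integral.\<close>
definition bond_energy_pos :: "(real \<Rightarrow> real \<Rightarrow> real) \<Rightarrow> (real \<Rightarrow> real \<Rightarrow> real measure)
    \<Rightarrow> ((nat \<Rightarrow> real) \<Rightarrow> real) \<Rightarrow> nat \<Rightarrow> (nat \<Rightarrow> real) \<Rightarrow> ennreal" where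
  "bond_energy_pos Lam P f i y = (if 0 < y i \<and> 0 < y (Suc i) then bond_energy Lam P f i y else 0)"

definition star_bond_energy :: "real \<Rightarrow> real \<Rightarrow> ((nat \<Rightarrow> real) \<Rightarrow> real) \<Rightarrow> nat \<Rightarrow> (nat \<Rightarrow> real) \<Rightarrow> ennreal" where
  "star_bond_energy g m f i y = ennreal ((y i + y (Suc i)) powr m * (Dij g i (Suc i) f y)\<^sup>2)"

lemma dirichlet_form_eq_sum_bond_energy:
  "dirichlet_form g Lam P E N f = (\<Sum>i<N - 1. \<integral>\<^sup>+ x. bond_energy Lam P f i x \<partial>nuEN g E N) / 2"
  unfolding dirichlet_form_def bond_energy_def ..

lemma Dstar_eq_sum_star_bond_energy:
  "Dstar g m E N f = (\<Sum>i<N - 1. \<integral>\<^sup>+ x. star_bond_energy g m f i x \<partial>nuEN g E N)"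
  unfolding Dstar_def star_bond_energy_def ..

lemma bond_energy_pos_bond_update:
  "bond_energy_pos Lam P (\<lambda>y. f (bond_update x i y) - c) 0 y = bond_energy_pos Lam P f i (bond_update x i y)"
  by (simp add: bond_energy_pos_def bond_energy_def Tmap_bond_update) (auto simp: bond_update_def)

lemma borel_measurable_bond_energy_pos:
  assumes em: "exchange_model Lam P" and i: "Suc i < N"
    and [measurable]: "f \<in> borel_measurable (PiM {..<N} (\<lambda>_. lborel))"
  shows "bond_energy_pos Lam P f i \<in> borel_measurable (PiM {..<N} (\<lambda>_. lborel))"
proof -
  have [measurable]: "(\<lambda>w::nat\<Rightarrow>real. w k) \<in> borel_measurable (PiM {..<N} (\<lambda>_. lborel))" if "k < N" for k
    using that measurable_component_singleton[of k "{..<N}" "\<lambda>_. lborel"] by simp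
  have "(\<lambda>(y, b). Tmap i (Suc i) b y) \<in> measurable (PiM {..<N} (\<lambda>_. lborel) \<Otimes>\<^sub>M borel) (PiM {..<N} (\<lambda>_. lborel))"
    using i by (intro measurable_Tmap) auto
  then have "(\<lambda>(y, b). ennreal ((f (Tmap i (Suc i) b y) - f y)\<^sup>2))
      \<in> borel_measurable (PiM {..<N} (\<lambda>_. lborel) \<Otimes>\<^sub>M borel)"
    by (simp add: split_beta') measurable
  then show ?thesis
    unfolding bond_energy_pos_def[abs_def] bond_energy_def
    using i by (intro borel_measurable_exchange_model_integral[OF em]) auto
qed

lemma nn_integral_bond_energy_pos:
  assumes "Suc i < N"
  shows "(\<integral>\<^sup>+ x. bond_energy_pos Lam P f i x \<partial>nuEN g E N) = (\<integral>\<^sup>+ x. bond_energy Lam P f i x \<partial>nuEN g E N)"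
  using AE_nuEN_pos[of N g E] assms by (intro nn_integral_cong_AE) (auto simp: bond_energy_pos_def)

lemma dirichlet_form_two_site_bond_update:
  assumes g: "0 < g" and em: "exchange_model Lam P" and i: "Suc i < N"
    and x: "x \<in> space (PiM {..<N} (\<lambda>_. lborel))" and t: "0 < x i + x (Suc i)"
    and [measurable]: "f \<in> borel_measurable (PiM {..<N} (\<lambda>_. lborel))"
  shows "dirichlet_form g Lam P ((x i + x (Suc i)) / 2) 2 (\<lambda>y. f (bond_update x i y) - c)
    = (\<integral>\<^sup>+ a. bond_energy_pos Lam P f i (Tmap i (Suc i) a x) \<partial>beta_meas g) / 2"
proof -
  define t where "t = x i + x (Suc i)"
  note [measurable] = measurable_bond_update[OF x i]
  have "bond_energy_pos Lam P (\<lambda>y. f (bond_update x i y) - c) 0 \<in> borel_measurable (PiM {..<2} (\<lambda>_. lborel))"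
    by (rule borel_measurable_bond_energy_pos[OF em]) auto
  then have "dirichlet_form g Lam P (t / 2) 2 (\<lambda>y. f (bond_update x i y) - c)
      = (\<integral>\<^sup>+ a. bond_energy_pos Lam P (\<lambda>y. f (bond_update x i y) - c) 0 (two_site_pt t a) \<partial>beta_meas g) / 2"
    using t unfolding t_def
    by (simp add: dirichlet_form_eq_sum_bond_energy nn_integral_bond_energy_pos[symmetric]
        nn_integral_nuEN_two_site[OF g])
  then show ?thesis
    by (simp add: t_def bond_energy_pos_bond_update bond_update_two_site_pt)
qed

lemma spectral_gap_mult_le_dirichlet_form:
  assumes "L2_meanzero (nuEN g E N) f"
  shows "spectral_gap g Lam P E N * ennreal (\<integral>x. (f x)\<^sup>2 \<partial>nuEN g E N) \<le> dirichlet_form g Lam P E N f"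
proof -
  have pos: "0 < (\<integral>x. (f x)\<^sup>2 \<partial>nuEN g E N)"
    using assms unfolding L2_meanzero_def by (simp add: order_le_neq_trans)
  have "spectral_gap g Lam P E N \<le> dirichlet_form g Lam P E N f / ennreal (\<integral>x. (f x)\<^sup>2 \<partial>nuEN g E N)"
    unfolding spectral_gap_def using assms by (intro INF_lower) simp
  then have "spectral_gap g Lam P E N * ennreal (\<integral>x. (f x)\<^sup>2 \<partial>nuEN g E N)
      \<le> dirichlet_form g Lam P E N f / ennreal (\<integral>x. (f x)\<^sup>2 \<partial>nuEN g E N) * ennreal (\<integral>x. (f x)\<^sup>2 \<partial>nuEN g E N)"
    by (rule mult_right_mono) simp
  also have "\<dots> = dirichlet_form g Lam P E N f"
    using pos by (simp add: ennreal_divide_times)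
  finally show ?thesis .
qed

lemma star_bond_energy_le_bond_energy_resampled:
  fixes f :: "(nat \<Rightarrow> real) \<Rightarrow> real"
  assumes g: "0 < g" and em: "exchange_model Lam P"
    and gap2: "\<forall>E>0. ennreal (C * E powr m) \<le> spectral_gap g Lam P E 2" and C: "0 \<le> C"
    and i: "Suc i < N" and f[measurable]: "f \<in> borel_measurable (PiM {..<N} (\<lambda>_. lborel))"
    and x: "x \<in> space (PiM {..<N} (\<lambda>_. lborel))" and pos: "0 < x i" "0 < x (Suc i)"
    and fin: "(\<integral>\<^sup>+ a. ennreal ((f (Tmap i (Suc i) a x))\<^sup>2) \<partial>beta_meas g) \<noteq> \<infinity>"
  shows "ennreal (C / 2 powr m) * (\<integral>\<^sup>+ a. star_bond_energy g m f i (Tmap i (Suc i) a x) \<partial>beta_meas g)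
     \<le> (\<integral>\<^sup>+ a. bond_energy_pos Lam P f i (Tmap i (Suc i) a x) \<partial>beta_meas g) / 2"
proof -
  interpret beta: prob_space "beta_meas g" by (rule prob_space_beta_meas[OF g])
  define t where "t = x i + x (Suc i)"
  have t: "0 < t" and pos_sum: "0 < x i + x (Suc i)" using pos by (simp_all add: t_def)
  define \<phi> where "\<phi> a = f (Tmap i (Suc i) a x)" for a
  have [measurable]: "(\<lambda>a. Tmap i (Suc i) a x) \<in> measurable borel (PiM {..<N} (\<lambda>_. lborel))"
    using i x by (intro measurable_Tmap_comp) auto
  then have [measurable]: "\<phi> \<in> borel_measurable borel"
    unfolding \<phi>_def by measurable
  have int2: "integrable (beta_meas g) (\<lambda>a. (\<phi> a)\<^sup>2)"
    using fin by (intro integrableI_bounded) (simp_all add: \<phi>_def less_top)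
  have int1: "integrable (beta_meas g) \<phi>"
    by (rule beta.square_integrable_imp_integrable[OF _ int2]) simp
  define c where "c = (\<integral>a. \<phi> a \<partial>beta_meas g)"
  have "(\<lambda>a. (\<phi> a - c)\<^sup>2) = (\<lambda>a. (\<phi> a)\<^sup>2 - 2 * c * \<phi> a + c\<^sup>2)"
    by (simp add: power2_diff algebra_simps)
  then have intV: "integrable (beta_meas g) (\<lambda>a. (\<phi> a - c)\<^sup>2)"
    using int1 int2 by (auto intro!: integrable_add integrable_diff integrable_mult_right)
  define V where "V = (\<integral>a. (\<phi> a - c)\<^sup>2 \<partial>beta_meas g)"
  text \<open>Along the bond orbit of \<open>x\<close>, \<open>Eij\<close> is the constant \<open>c\<close>, so the star energy is \<open>t^m\<close> times a variance.\<close>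
  have "Eij g i (Suc i) f (Tmap i (Suc i) a x) = c" for a
    unfolding Eij_def Tmap_Tmap[OF n_not_Suc_n] c_def \<phi>_def ..
  then have "(\<integral>\<^sup>+ a. star_bond_energy g m f i (Tmap i (Suc i) a x) \<partial>beta_meas g)
      = (\<integral>\<^sup>+ a. ennreal (t powr m) * ennreal ((\<phi> a - c)\<^sup>2) \<partial>beta_meas g)"
    by (intro nn_integral_cong) (simp add: star_bond_energy_def Tmap_sum Dij_def t_def[symmetric]
        \<phi>_def[symmetric] ennreal_mult power2_commute)
  also have "\<dots> = ennreal (t powr m) * ennreal V"
    unfolding V_def by (simp add: nn_integral_cmult nn_integral_eq_integral[OF intV])
  finally have star: "(\<integral>\<^sup>+ a. star_bond_energy g m f i (Tmap i (Suc i) a x) \<partial>beta_meas g)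
      = ennreal (t powr m) * ennreal V" .
  show ?thesis
  proof (cases "V = 0")
    case True
    then show ?thesis unfolding star by simp
  next
    case False
    define h where "h y = f (bond_update x i y) - c" for y
    have [measurable]: "h \<in> borel_measurable (PiM {..<2} (\<lambda>_. lborel))"
      unfolding h_def using measurable_bond_update[OF x i] by measurable
    have h_two_site: "h (two_site_pt t a) = \<phi> a - c" for a
      by (simp add: h_def \<phi>_def t_def bond_update_two_site_pt)
    note nu2 = nuEN_two_site_eq_distr[OF g t]
    have sq: "(\<integral>y. (h y)\<^sup>2 \<partial>nuEN g (t / 2) 2) = V"
      unfolding nu2 V_def by (subst integral_distr) (auto simp: h_two_site)
    have "L2_meanzero (nuEN g (t / 2) 2) h"
      unfolding L2_meanzero_def
    proof (intro conjI)
      show "h \<in> borel_measurable (nuEN g (t / 2) 2)" unfolding nu2 by simp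
      show "integrable (nuEN g (t / 2) 2) (\<lambda>y. (h y)\<^sup>2)"
        unfolding nu2 by (subst integrable_distr_eq) (auto simp: h_two_site intV)
      show "(\<integral>y. h y \<partial>nuEN g (t / 2) 2) = 0"
        unfolding nu2 using int1 beta.prob_space by (subst integral_distr) (auto simp: h_two_site c_def)
    qed (use sq False in simp)
    then have gap: "spectral_gap g Lam P (t / 2) 2 * ennreal V \<le> dirichlet_form g Lam P (t / 2) 2 h"
      using spectral_gap_mult_le_dirichlet_form[of g "t / 2" 2 h] sq by simp
    have "ennreal (C / 2 powr m) * (ennreal (t powr m) * ennreal V) = ennreal (C * (t / 2) powr m) * ennreal V"
      using C t by (simp add: ennreal_mult[symmetric] powr_divide mult.assoc[symmetric] times_divide_eq_right)
    also have "\<dots> \<le> spectral_gap g Lam P (t / 2) 2 * ennreal V"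
      using gap2 t by (intro mult_right_mono) auto
    also have "\<dots> \<le> dirichlet_form g Lam P (t / 2) 2 h"
      by (fact gap)
    also have "\<dots> = (\<integral>\<^sup>+ a. bond_energy_pos Lam P f i (Tmap i (Suc i) a x) \<partial>beta_meas g) / 2"
      unfolding h_def t_def by (rule dirichlet_form_two_site_bond_update[OF g em i x pos_sum f])
    finally show ?thesis unfolding star .
  qed
qed

lemma star_bond_energy_le_bond_energy:
  fixes f :: "(nat \<Rightarrow> real) \<Rightarrow> real"
  assumes g: "0 < g" and em: "exchange_model Lam P"
    and gap2: "\<forall>E>0. ennreal (C * E powr m) \<le> spectral_gap g Lam P E 2" and C: "0 \<le> C"
    and i: "Suc i < N" and f: "L2_meanzero (nuEN g E N) f"
  shows "ennreal (C / 2 powr m) * (\<integral>\<^sup>+ x. star_bond_energy g m f i x \<partial>nuEN g E N)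
    \<le> (\<integral>\<^sup>+ x. bond_energy Lam P f i x \<partial>nuEN g E N) / 2"
proof -
  interpret beta: prob_space "beta_meas g" by (rule prob_space_beta_meas[OF g])
  have N0: "0 < N" using i by simp
  have sets_nu[measurable_cong]: "sets (nuEN g E N) = sets (PiM {..<N} (\<lambda>_. lborel))"
    by (simp add: nuEN_def)
  have fm[measurable]: "f \<in> borel_measurable (PiM {..<N} (\<lambda>_. lborel))"
    using f by (simp add: L2_meanzero_def nuEN_def)
  have "(\<lambda>(x, a). f (Tmap i (Suc i) a x)) \<in> borel_measurable (PiM {..<N} (\<lambda>_. lborel) \<Otimes>\<^sub>M beta_meas g)"
    using i by (simp add: split_beta') measurable
  then have [measurable]: "(\<lambda>x. Eij g i (Suc i) f x) \<in> borel_measurable (PiM {..<N} (\<lambda>_. lborel))"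
    unfolding Eij_def
    using beta.borel_measurable_lebesgue_integral by simp
  have [measurable]: "(\<lambda>w::nat\<Rightarrow>real. w i) \<in> borel_measurable (PiM {..<N} (\<lambda>_. lborel))"
      "(\<lambda>w::nat\<Rightarrow>real. w (Suc i)) \<in> borel_measurable (PiM {..<N} (\<lambda>_. lborel))"
    using i measurable_component_singleton[of _ "{..<N}" "\<lambda>_. lborel :: real measure"] by auto
  have star[measurable]: "star_bond_energy g m f i \<in> borel_measurable (PiM {..<N} (\<lambda>_. lborel))"
    unfolding star_bond_energy_def[abs_def] Dij_def by measurable
  have bond[measurable]: "bond_energy_pos Lam P f i \<in> borel_measurable (PiM {..<N} (\<lambda>_. lborel))"
    by (rule borel_measurable_bond_energy_pos[OF em i fm])
  have resample: "(\<lambda>x. \<integral>\<^sup>+ a. F (Tmap i (Suc i) a x) \<partial>beta_meas g) \<in> borel_measurable (nuEN g E N)"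
    if "F \<in> borel_measurable (PiM {..<N} (\<lambda>_. lborel))" for F
    using borel_measurable_nn_integral_resample[OF g _ _ that measurable_ident_sets[OF sets_nu]] i by simp
  have sq: "(\<lambda>x. ennreal ((f x)\<^sup>2)) \<in> borel_measurable (PiM {..<N} (\<lambda>_. lborel))"
    by measurable
  from nn_integral_nuEN_resample[OF g i sq, of E, symmetric]
  have "(\<integral>\<^sup>+ x. (\<integral>\<^sup>+ a. ennreal ((f (Tmap i (Suc i) a x))\<^sup>2) \<partial>beta_meas g) \<partial>nuEN g E N)
      = (\<integral>\<^sup>+ x. ennreal ((f x)\<^sup>2) \<partial>nuEN g E N)" .
  also have "\<dots> = ennreal (\<integral>x. (f x)\<^sup>2 \<partial>nuEN g E N)"
    using f by (intro nn_integral_eq_integral) (auto simp: L2_meanzero_def)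
  finally have "(\<integral>\<^sup>+ x. (\<integral>\<^sup>+ a. ennreal ((f (Tmap i (Suc i) a x))\<^sup>2) \<partial>beta_meas g) \<partial>nuEN g E N) \<noteq> \<infinity>"
    by simp
  with resample[OF sq]
  have fin: "AE x in nuEN g E N. (\<integral>\<^sup>+ a. ennreal ((f (Tmap i (Suc i) a x))\<^sup>2) \<partial>beta_meas g) \<noteq> \<infinity>"
    by (rule nn_integral_PInf_AE)
  have "ennreal (C / 2 powr m) * (\<integral>\<^sup>+ x. star_bond_energy g m f i x \<partial>nuEN g E N)
      = (\<integral>\<^sup>+ x. ennreal (C / 2 powr m) * (\<integral>\<^sup>+ a. star_bond_energy g m f i (Tmap i (Suc i) a x) \<partial>beta_meas g) \<partial>nuEN g E N)"
    by (simp add: nn_integral_nuEN_resample[OF g i star] nn_integral_cmult resample)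
  also have "\<dots> \<le> (\<integral>\<^sup>+ x. (\<integral>\<^sup>+ a. bond_energy_pos Lam P f i (Tmap i (Suc i) a x) \<partial>beta_meas g) / 2 \<partial>nuEN g E N)"
  proof (rule nn_integral_mono_AE)
    show "AE x in nuEN g E N. ennreal (C / 2 powr m) * (\<integral>\<^sup>+ a. star_bond_energy g m f i (Tmap i (Suc i) a x) \<partial>beta_meas g)
        \<le> (\<integral>\<^sup>+ a. bond_energy_pos Lam P f i (Tmap i (Suc i) a x) \<partial>beta_meas g) / 2"
      using AE_nuEN_pos[OF N0, of g E] fin AE_space[of "nuEN g E N"]
    proof eventually_elim
      case (elim x)
      then show ?case using i sets_eq_imp_space_eq[OF sets_nu]
        by (intro star_bond_energy_le_bond_energy_resampled[OF g em gap2 C i fm]) auto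
    qed
  qed
  also have "\<dots> = (\<integral>\<^sup>+ x. bond_energy Lam P f i x \<partial>nuEN g E N) / 2"
    by (simp add: nn_integral_divide resample nn_integral_nuEN_resample[OF g i bond, symmetric]
        nn_integral_bond_energy_pos[OF i])
  finally show ?thesis .
qed

lemma Dstar_le_dirichlet_form:
  assumes g: "0 < g" and em: "exchange_model Lam P"
    and gap2: "\<forall>E>0. ennreal (C * E powr m) \<le> spectral_gap g Lam P E 2" and C: "0 \<le> C"
    and f: "L2_meanzero (nuEN g E N) f"
  shows "ennreal (C / 2 powr m) * Dstar g m E N f \<le> dirichlet_form g Lam P E N f"
proof -
  have "ennreal (C / 2 powr m) * Dstar g m E N f
      = (\<Sum>i<N - 1. ennreal (C / 2 powr m) * (\<integral>\<^sup>+ x. star_bond_energy g m f i x \<partial>nuEN g E N))"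
    by (simp add: Dstar_eq_sum_star_bond_energy sum_distrib_left)
  also have "\<dots> \<le> (\<Sum>i<N - 1. (\<integral>\<^sup>+ x. bond_energy Lam P f i x \<partial>nuEN g E N) / 2)"
    by (intro sum_mono star_bond_energy_le_bond_energy[OF g em gap2 C _ f]) auto
  also have "\<dots> = dirichlet_form g Lam P E N f"
    by (simp add: dirichlet_form_eq_sum_bond_energy divide_ennreal_def sum_distrib_right)
  finally show ?thesis .
qed

theorem proposition2:
  fixes g C m :: real and Lam :: "real \<Rightarrow> real \<Rightarrow> real" and P :: "real \<Rightarrow> real \<Rightarrow> real measure"
  assumes "0 < g"
    and "exchange_model Lam P"
    and "reversible_model g Lam P"
    and "0 < C" and "0 \<le> m"
    and "\<forall>E>0. ennreal (C * E powr m) \<le> spectral_gap g Lam P E 2"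
  shows "\<forall>E>0. \<forall>N\<ge>2. ennreal (C / 2 powr m) * lambda_star g m E N \<le> spectral_gap g Lam P E N"
proof (intro allI impI)
  fix E :: real and N :: nat
  let ?c = "ennreal (C / 2 powr m)" and ?norm = "\<lambda>f. ennreal (\<integral>x. (f x)\<^sup>2 \<partial>nuEN g E N)"
  show "?c * lambda_star g m E N \<le> spectral_gap g Lam P E N"
    unfolding spectral_gap_def
  proof (rule INF_greatest)
    fix f assume f: "f \<in> {f. L2_meanzero (nuEN g E N) f}"
    have "?c * lambda_star g m E N \<le> ?c * (Dstar g m E N f / ?norm f)"
      unfolding lambda_star_def using f by (intro mult_left_mono INF_lower) auto
    also have "\<dots> = ?c * Dstar g m E N f / ?norm f"
      by (simp add: ennreal_times_divide)
    also have "\<dots> \<le> dirichlet_form g Lam P E N f / ?norm f"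
      using f assms by (intro divide_right_mono_ennreal Dstar_le_dirichlet_form) auto
    finally show "?c * lambda_star g m E N \<le> dirichlet_form g Lam P E N f / ?norm f" .
  qed
qed

end
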